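(* Let $E$ be a finite-dimensional complex Hilbert space, $e\in E$ a unit vector, $\tau\in(0,1)$, $\rho:=1-\tau$, and let $T_0\in B(E)_+$ be strictly positive. Define $$T_{n+1}:=T_n^{1/2}\bigl(I_E-\tau|e\rangle\langle e|\bigr)T_n^{1/2}\qquad(n\ge0).$$ Then each $T_n$ is strictly positive and $$T_{n+1}^{-1}=T_n^{-1}+\frac{\tau}{\rho}\,|T_n^{-1/2}e\rangle\langle T_n^{-1/2}e|.$$ Setting $\beta_n:=\langle e,T_n^{-1}e\rangle$ and $s_n:=\mathrm{tr}(T_n^{-1})$, one has $$\beta_{n+1}-\beta_n=\frac{\tau}{\rho}|\langle e,T_n^{-1/2}e\rangle|^2,\qquad s_{n+1}-s_n=\frac{\tau}{\rho}\beta_n.$$ In particular, for all $n\ge0$, $$\beta_n\ge\beta_0+n\frac{\tau}{\rho\|T_0\|},\qquad s_n\ge s_0+\frac{\tau}{\rho}n\beta_0+\frac{\tau^2}{2\rho^2\|T_0\|}n(n-1).$$ Consequently there is a constant $C>0$ depending only on $T_0$ and $\tau$ such that $$\lambda_{\min}(T_n)\le\frac{\dim E}{s_n}\le\frac{C}{n^2}\qquad(n\ge1).$$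
   Context: For vectors $x,y$, $|x\rangle\langle y|$ denotes the operator $z\mapsto\langle y,z\rangle x$. $B(E)_+$ denotes positive operators; $T^{1/2}$, $T^{-1/2}$ are the positive square root and its inverse. $\lambda_{\min}(T)$ is the smallest eigenvalue of $T$. *)

theory Defs
  imports "Jordan_Normal_Form.Matrix" "Jordan_Normal_Form.Char_Poly" "HOL.Complex"
begin

text \<open>The finite-dimensional complex Hilbert space E is modelled as C^d
  (complex vectors of dimension d) with the standard inner product, which is
  antilinear in the first and linear in the second argument; operators on E are
  d x d complex matrices.\<close>

definition cinner :: "complex vec \<Rightarrow> complex vec \<Rightarrow> complex" where
  "cinner x y = (\<Sum>i<dim_vec y. cnj (x $ i) * y $ i)"

definition vnorm :: "complex vec \<Rightarrow> real" where
  "vnorm x = sqrt (\<Sum>i<dim_vec x. (cmod (x $ i))\<^sup>2)"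

definition adj :: "complex mat \<Rightarrow> complex mat" where
  "adj A = mat (dim_col A) (dim_row A) (\<lambda>(i,j). cnj (A $$ (j,i)))"

definition positive_op :: "nat \<Rightarrow> complex mat \<Rightarrow> bool" where
  "positive_op d A \<longleftrightarrow> A \<in> carrier_mat d d \<and> adj A = A \<and>
     (\<forall>x \<in> carrier_vec d. 0 \<le> Re (cinner x (A *\<^sub>v x)))"

text \<open>Strictly positive operators (positive and invertible; in finite
  dimension: positive definite).\<close>
definition strictly_positive :: "nat \<Rightarrow> complex mat \<Rightarrow> bool" where
  "strictly_positive d A \<longleftrightarrow> A \<in> carrier_mat d d \<and> adj A = A \<and>
     (\<forall>x \<in> carrier_vec d. x \<noteq> 0\<^sub>v d \<longrightarrow> 0 < Re (cinner x (A *\<^sub>v x)))"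

definition msqrt :: "complex mat \<Rightarrow> complex mat" where
  "msqrt A = (THE S. positive_op (dim_row A) S \<and> S * S = A)"

definition minv :: "complex mat \<Rightarrow> complex mat" where
  "minv A = (THE B. B \<in> carrier_mat (dim_row A) (dim_row A) \<and>
                     A * B = 1\<^sub>m (dim_row A) \<and> B * A = 1\<^sub>m (dim_row A))"

definition minvsqrt :: "complex mat \<Rightarrow> complex mat" where
  "minvsqrt A = msqrt (minv A)"

definition ketbra :: "complex vec \<Rightarrow> complex vec \<Rightarrow> complex mat" where
  "ketbra x y = mat (dim_vec x) (dim_vec y) (\<lambda>(i,j). x $ i * cnj (y $ j))"

definition mtrace :: "complex mat \<Rightarrow> complex" where
  "mtrace A = (\<Sum>i<dim_row A. A $$ (i,i))"

definition opnorm :: "complex mat \<Rightarrow> real" where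
  "opnorm A = Sup {vnorm (A *\<^sub>v x) | x. x \<in> carrier_vec (dim_col A) \<and> vnorm x = 1}"

text \<open>Smallest eigenvalue (for self-adjoint operators, whose eigenvalues are real).\<close>
definition lambda_min :: "complex mat \<Rightarrow> real" where
  "lambda_min A = Min {r :: real. eigenvalue A (complex_of_real r)}"

primrec Tseq :: "real \<Rightarrow> complex vec \<Rightarrow> complex mat \<Rightarrow> nat \<Rightarrow> complex mat" where
  "Tseq \<tau> e T0 0 = T0"
| "Tseq \<tau> e T0 (Suc k) =
     msqrt (Tseq \<tau> e T0 k) *
       (1\<^sub>m (dim_vec e) - complex_of_real \<tau> \<cdot>\<^sub>m ketbra e e) *
     msqrt (Tseq \<tau> e T0 k)"

end

theory Submission
  imports Defs
begin

(* Write S = T^(1/2), R = T^(-1/2) and M = I - tau |e><e| for one step T -> T' = S M S.  Since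
   M^(-1) = I + (tau/rho) |e><e|, the inverse is T'^(-1) = R M^(-1) R = T^(-1) + (tau/rho) |Re><Re|;
   taking <e, _ e> and the trace gives the two recurrences.  As <x, T' x> <= <x, T x>, every eigenvalue
   of every T_n is at most ||T_0||, hence |<e, T_n^(-1/2) e>|^2 >= 1/||T_0||, and summing the
   recurrences yields the linear and quadratic lower bounds.  Finally tr(T^(-1)) is the sum of the
   reciprocal eigenvalues, so lambda_min(T) <= dim E / tr(T^(-1)).  All functional calculus rests on
   the spectral theorem for Hermitian matrices, proved by deflation with a Householder reflection. *)

section \<open>Vectors, inner product and adjoint\<close>

lemma vnorm_nonneg: "0 \<le> vnorm x"
  by (simp add: vnorm_def sum_nonneg)

lemma cinner_self: "cinner x x = complex_of_real ((vnorm x)\<^sup>2)"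
proof -
  have "cinner x x = complex_of_real (\<Sum>i<dim_vec x. (cmod (x $ i))\<^sup>2)"
    unfolding cinner_def of_real_sum
    by (intro sum.cong refl, subst complex_norm_square) (simp add: mult.commute)
  thus ?thesis by (simp add: vnorm_def sum_nonneg)
qed

lemma Re_cinner_self: "Re (cinner x x) = (vnorm x)\<^sup>2"
  by (simp add: cinner_self)

lemma vnorm_eq_1_iff: "vnorm x = 1 \<longleftrightarrow> cinner x x = 1"
proof -
  have "cinner x x = 1 \<longleftrightarrow> (vnorm x)\<^sup>2 = 1"
    by (simp only: cinner_self of_real_eq_1_iff)
  thus ?thesis using vnorm_nonneg[of x] by (auto simp: power2_eq_1_iff)
qed

lemma vnorm_eq_0_iff: "vnorm x = 0 \<longleftrightarrow> x = 0\<^sub>v (dim_vec x)"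
proof -
  have "vnorm x = 0 \<longleftrightarrow> (\<forall>i\<in>{..<dim_vec x}. (cmod (x $ i))\<^sup>2 = 0)"
    unfolding vnorm_def by (simp add: sum_nonneg_eq_0_iff)
  also have "\<dots> \<longleftrightarrow> x = 0\<^sub>v (dim_vec x)"
    by (auto simp: vec_eq_iff)
  finally show ?thesis .
qed

lemma vnorm_zero_vec[simp]: "vnorm (0\<^sub>v n) = 0"
  by (simp add: vnorm_def)

lemma vnorm_smult: "vnorm (c \<cdot>\<^sub>v x) = cmod c * vnorm x"
  by (simp add: vnorm_def norm_mult power_mult_distrib real_sqrt_mult flip: sum_distrib_left)

lemma cmod_index_le_vnorm: "i < dim_vec x \<Longrightarrow> cmod (x $ i) \<le> vnorm x"
  unfolding vnorm_def by (intro real_le_rsqrt member_le_sum) auto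

lemma cnj_mult_self: "cnj z * z = complex_of_real ((cmod z)\<^sup>2)"
  by (subst complex_norm_square) (simp add: mult.commute)

lemma cinner_add_right: "dim_vec y = dim_vec z \<Longrightarrow> cinner x (y + z) = cinner x y + cinner x z"
  by (simp add: cinner_def algebra_simps sum.distrib)

lemma cinner_minus_right: "dim_vec y = dim_vec z \<Longrightarrow> cinner x (y - z) = cinner x y - cinner x z"
  by (simp add: cinner_def algebra_simps sum_subtractf)

lemma cinner_uminus_right: "cinner x (- v) = - cinner x v"
  by (simp add: cinner_def sum_negf)

lemma cinner_smult_right: "cinner x (c \<cdot>\<^sub>v y) = c * cinner x y"
  by (simp add: cinner_def algebra_simps sum_distrib_left)

lemma cinner_minus_left:
  "dim_vec x = dim_vec z \<Longrightarrow> dim_vec y = dim_vec z \<Longrightarrow> cinner (x - y) z = cinner x z - cinner y z"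
  by (simp add: cinner_def algebra_simps sum_subtractf)

lemma cinner_smult_left: "dim_vec x = dim_vec z \<Longrightarrow> cinner (c \<cdot>\<^sub>v x) z = cnj c * cinner x z"
  by (simp add: cinner_def algebra_simps sum_distrib_left)

lemma cinner_conj_commute: "dim_vec x = dim_vec y \<Longrightarrow> cinner y x = cnj (cinner x y)"
  by (simp add: cinner_def cnj_sum mult.commute)

lemma cinner_unit_vec_left: "j < n \<Longrightarrow> dim_vec v = n \<Longrightarrow> cinner (unit_vec n j) v = v $ j"
  by (simp add: cinner_def if_distrib[of "\<lambda>a. cnj a * _"] cong: if_cong)

lemma cinner_unit_vec_right: "j < n \<Longrightarrow> dim_vec v = n \<Longrightarrow> cinner v (unit_vec n j) = cnj (v $ j)"
  using cinner_conj_commute[of "unit_vec n j" v] by (simp add: cinner_unit_vec_left)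

lemma vnorm_unit_vec: "i < n \<Longrightarrow> vnorm (unit_vec n i) = 1"
  by (simp add: vnorm_eq_1_iff cinner_unit_vec_left)

lemma cmod_cinner_unit_sq_le:
  assumes "dim_vec y = dim_vec e" "vnorm e = 1"
  shows "(cmod (cinner e y))\<^sup>2 \<le> (vnorm y)\<^sup>2"
proof -
  define c where "c = cinner e y"
  have "cinner e e = 1" using assms(2) by (simp add: vnorm_eq_1_iff)
  hence "cinner (y - c \<cdot>\<^sub>v e) (y - c \<cdot>\<^sub>v e) = cinner y y - cnj c * c"
    using assms(1) cinner_conj_commute[of e y]
    by (simp add: c_def cinner_minus_left cinner_minus_right cinner_smult_left cinner_smult_right
        algebra_simps)
  hence "(vnorm (y - c \<cdot>\<^sub>v e))\<^sup>2 = (vnorm y)\<^sup>2 - (cmod c)\<^sup>2"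
    by (metis Re_cinner_self Re_complex_of_real minus_complex.sel(1) complex_norm_square
        mult.commute)
  thus ?thesis unfolding c_def by (metis diff_ge_0_iff_ge zero_le_power2)
qed

lemma adj_carrier[simp]: "adj A \<in> carrier_mat (dim_col A) (dim_row A)"
  by (simp add: adj_def)

lemma adj_carrier_mat[simp]: "A \<in> carrier_mat n m \<Longrightarrow> adj A \<in> carrier_mat m n"
  using adj_carrier[of A] by auto

lemma dim_adj[simp]: "dim_row (adj A) = dim_col A" "dim_col (adj A) = dim_row A"
  by (simp_all add: adj_def)

lemma index_adj[simp]: "i < dim_col A \<Longrightarrow> j < dim_row A \<Longrightarrow> adj A $$ (i,j) = cnj (A $$ (j,i))"
  by (simp add: adj_def)

lemma adj_adj[simp]: "adj (adj A) = A"
  by (rule eq_matI) auto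

lemma adj_mult: "A \<in> carrier_mat n m \<Longrightarrow> B \<in> carrier_mat m k \<Longrightarrow> adj (A * B) = adj B * adj A"
  by (intro eq_matI) (auto simp: scalar_prod_def cnj_sum mult.commute)

lemma adj_one[simp]: "adj (1\<^sub>m n) = 1\<^sub>m n"
  by (rule eq_matI) auto

lemma adj_minus: "A \<in> carrier_mat n m \<Longrightarrow> B \<in> carrier_mat n m \<Longrightarrow> adj (A - B) = adj A - adj B"
  by (intro eq_matI) auto

lemma adj_smult: "adj (c \<cdot>\<^sub>m A) = cnj c \<cdot>\<^sub>m adj A"
  by (intro eq_matI) auto

lemma cinner_adj:
  assumes "A \<in> carrier_mat n m" "x \<in> carrier_vec n" "y \<in> carrier_vec m"
  shows "cinner x (A *\<^sub>v y) = cinner (adj A *\<^sub>v x) y"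
proof -
  have "cinner x (A *\<^sub>v y) = (\<Sum>i<n. \<Sum>j<m. cnj (x$i) * A$$(i,j) * y$j)"
    using assms by (simp add: cinner_def scalar_prod_def sum_distrib_left atLeast0LessThan mult.assoc)
  also have "\<dots> = (\<Sum>j<m. (\<Sum>i<n. cnj (x$i) * A$$(i,j)) * y$j)"
    by (subst sum.swap) (simp add: sum_distrib_right)
  also have "\<dots> = cinner (adj A *\<^sub>v x) y"
    using assms by (simp add: cinner_def scalar_prod_def atLeast0LessThan mult.commute)
  finally show ?thesis .
qed

lemma cinner_hermitian:
  "A \<in> carrier_mat n n \<Longrightarrow> adj A = A \<Longrightarrow> x \<in> carrier_vec n \<Longrightarrow> y \<in> carrier_vec n \<Longrightarrow>
   cinner x (A *\<^sub>v y) = cinner (A *\<^sub>v x) y"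
  using cinner_adj[of A n n x y] by simp

lemma smult_smult_mat: "a \<cdot>\<^sub>m (b \<cdot>\<^sub>m (A :: complex mat)) = (a * b) \<cdot>\<^sub>m A"
  by (intro eq_matI) (auto simp: mult.assoc)

lemma smult_mult_smult_mat:
  "A \<in> carrier_mat n m \<Longrightarrow> B \<in> carrier_mat m k \<Longrightarrow>
   (a \<cdot>\<^sub>m A) * (b \<cdot>\<^sub>m B) = (a * b) \<cdot>\<^sub>m (A * B :: complex mat)"
  by (intro eq_matI) (auto simp: scalar_prod_def sum_distrib_left mult_ac)

lemma smult_mat_mult_vec:
  "(A :: complex mat) \<in> carrier_mat n m \<Longrightarrow> v \<in> carrier_vec m \<Longrightarrow>
   (c \<cdot>\<^sub>m A) *\<^sub>v v = A *\<^sub>v (c \<cdot>\<^sub>v v)"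
  by (intro eq_vecI) (auto simp: scalar_prod_def mult_ac intro!: sum.cong)

lemma assoc_mult_mat_dim:
  "dim_col (A :: complex mat) = dim_row B \<Longrightarrow> dim_col B = dim_row C \<Longrightarrow> A * B * C = A * (B * C)"
  by (rule assoc_mult_mat[of A "dim_row A" "dim_col A" B "dim_col B" C "dim_col C"]) auto

lemma assoc_mult_mat_vec_dim:
  "dim_col (A :: complex mat) = dim_row B \<Longrightarrow> dim_col B = dim_vec v \<Longrightarrow> A * B *\<^sub>v v = A *\<^sub>v (B *\<^sub>v v)"
  by (rule assoc_mult_mat_vec[of A "dim_row A" "dim_col A" B "dim_col B" v]) auto

lemma mult_unit_vec_index:
  "(A :: complex mat) \<in> carrier_mat n m \<Longrightarrow> i < n \<Longrightarrow> j < m \<Longrightarrow> (A *\<^sub>v unit_vec m j) $ i = A $$ (i,j)"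
  by (simp add: scalar_prod_def unit_vec_def atLeast0LessThan if_distrib cong: if_cong)

lemma mult_inverse_cancel_left:
  assumes X: "(X :: complex mat) \<in> carrier_mat n n" and Y: "Y \<in> carrier_mat n n" and XY: "X * Y = 1\<^sub>m n"
    and Z: "Z \<in> carrier_mat n m"
  shows "X * (Y * Z) = Z"
proof -
  have "X * (Y * Z) = (X * Y) * Z" by (rule assoc_mult_mat[OF X Y Z, symmetric])
  also have "\<dots> = Z" using XY left_mult_one_mat[OF Z] by simp
  finally show ?thesis .
qed

lemma minv_eqI:
  assumes A: "A \<in> carrier_mat n n" and B: "B \<in> carrier_mat n n" and AB: "A * B = 1\<^sub>m n"
  shows "minv A = B"
proof -
  have BA: "B * A = 1\<^sub>m n" using mat_mult_left_right_inverse[OF A B AB] .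
  have dA: "dim_row A = n" using A by simp
  show ?thesis unfolding minv_def dA
  proof (rule the_equality)
    show "B \<in> carrier_mat n n \<and> A * B = 1\<^sub>m n \<and> B * A = 1\<^sub>m n" using B AB BA by simp
    fix B' assume B': "B' \<in> carrier_mat n n \<and> A * B' = 1\<^sub>m n \<and> B' * A = 1\<^sub>m n"
    hence B'c: "B' \<in> carrier_mat n n" by simp
    have "B' = B' * (A * B)" using right_mult_one_mat[OF B'c] by (simp add: AB)
    also have "\<dots> = (B' * A) * B" by (rule assoc_mult_mat[OF B'c A B, symmetric])
    also have "\<dots> = B" using B' B by simp
    finally show "B' = B" .
  qed
qed

lemma minv_sandwich:
  assumes S: "S \<in> carrier_mat n n" and R: "R \<in> carrier_mat n n" and SR: "S * R = 1\<^sub>m n"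
    and M: "M \<in> carrier_mat n n" and M': "M' \<in> carrier_mat n n" and MM': "M * M' = 1\<^sub>m n"
  shows "minv (S * M * S) = R * M' * R"
proof (rule minv_eqI)
  show "S * M * S \<in> carrier_mat n n" "R * M' * R \<in> carrier_mat n n" using S R M M' by auto
  have "S * M * S * (R * M' * R) = S * (M * (S * (R * (M' * R))))"
    using S R M M' by (simp add: assoc_mult_mat[of _ n n _ n _ n])
  also have "S * (R * (M' * R)) = M' * R"
    using mult_carrier_mat[OF M' R] by (rule mult_inverse_cancel_left[OF S R SR])
  also have "M * (M' * R) = R" by (rule mult_inverse_cancel_left[OF M M' MM' R])
  finally show "S * M * S * (R * M' * R) = 1\<^sub>m n" using SR by simp
qed

lemma mtrace_add: "A \<in> carrier_mat n n \<Longrightarrow> B \<in> carrier_mat n n \<Longrightarrow> mtrace (A + B) = mtrace A + mtrace B"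
  by (simp add: mtrace_def sum.distrib)

lemma mtrace_smult: "A \<in> carrier_mat n n \<Longrightarrow> mtrace (c \<cdot>\<^sub>m A) = c * mtrace A"
  by (simp add: mtrace_def sum_distrib_left)

lemma mtrace_mult_commute:
  assumes "A \<in> carrier_mat n m" "B \<in> carrier_mat m n"
  shows "mtrace (A * B) = mtrace (B * A)"
proof -
  have "mtrace (A * B) = (\<Sum>i<n. \<Sum>j<m. A $$ (i,j) * B $$ (j,i))"
    unfolding mtrace_def using assms by (simp add: scalar_prod_def atLeast0LessThan)
  also have "\<dots> = (\<Sum>j<m. \<Sum>i<n. B $$ (j,i) * A $$ (i,j))"
    by (subst sum.swap) (simp add: mult.commute)
  also have "\<dots> = mtrace (B * A)"
    unfolding mtrace_def using assms by (simp add: scalar_prod_def atLeast0LessThan)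
  finally show ?thesis .
qed

lemma ketbra_carrier[simp]: "ketbra x y \<in> carrier_mat (dim_vec x) (dim_vec y)"
  by (simp add: ketbra_def)

lemma dim_ketbra[simp]: "dim_row (ketbra x y) = dim_vec x" "dim_col (ketbra x y) = dim_vec y"
  by (simp_all add: ketbra_def)

lemma index_ketbra[simp]:
  "i < dim_vec x \<Longrightarrow> j < dim_vec y \<Longrightarrow> ketbra x y $$ (i,j) = x$i * cnj (y$j)"
  by (simp add: ketbra_def)

lemma ketbra_mult_vec: "dim_vec z = dim_vec y \<Longrightarrow> ketbra x y *\<^sub>v z = cinner y z \<cdot>\<^sub>v x"
  by (intro eq_vecI)
    (auto simp: cinner_def scalar_prod_def sum_distrib_left atLeast0LessThan mult_ac)

lemma mult_ketbra: "A \<in> carrier_mat n (dim_vec x) \<Longrightarrow> A * ketbra x y = ketbra (A *\<^sub>v x) y"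
  by (intro eq_matI) (auto simp: scalar_prod_def sum_distrib_right mult.assoc)

lemma ketbra_mult: "B \<in> carrier_mat (dim_vec y) k \<Longrightarrow> ketbra x y * B = ketbra x (adj B *\<^sub>v y)"
  by (intro eq_matI) (auto simp: scalar_prod_def sum_distrib_left cnj_sum mult_ac)

lemma adj_ketbra: "adj (ketbra x y) = ketbra y x"
  by (intro eq_matI) auto

lemma ketbra_ketbra: "dim_vec y = dim_vec z \<Longrightarrow> ketbra x y * ketbra z w = cinner y z \<cdot>\<^sub>m ketbra x w"
  by (intro eq_matI)
    (auto simp: scalar_prod_def cinner_def sum_distrib_left sum_distrib_right atLeast0LessThan mult_ac)

lemma mtrace_ketbra: "dim_vec x = dim_vec y \<Longrightarrow> mtrace (ketbra x y) = cinner y x"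
  by (simp add: mtrace_def cinner_def mult.commute)

definition id_minus_ketbra :: "real \<Rightarrow> complex vec \<Rightarrow> complex mat" where
  "id_minus_ketbra t w = 1\<^sub>m (dim_vec w) - complex_of_real t \<cdot>\<^sub>m ketbra w w"

lemma id_minus_ketbra_carrier: "dim_vec w = n \<Longrightarrow> id_minus_ketbra t w \<in> carrier_mat n n"
  unfolding id_minus_ketbra_def using ketbra_carrier[of w w]
  by (intro minus_carrier_mat smult_carrier_mat) simp

lemma adj_id_minus_ketbra: "adj (id_minus_ketbra t w) = id_minus_ketbra t w"
  using ketbra_carrier[of w w]
  by (simp add: id_minus_ketbra_def adj_minus[of _ "dim_vec w" "dim_vec w"] adj_smult adj_ketbra)

lemma id_minus_ketbra_zero: "id_minus_ketbra 0 w = 1\<^sub>m (dim_vec w)"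
  by (intro eq_matI) (auto simp: id_minus_ketbra_def)

lemma id_minus_ketbra_mult_vec:
  assumes "dim_vec v = dim_vec w"
  shows "id_minus_ketbra t w *\<^sub>v v = v - (complex_of_real t * cinner w v) \<cdot>\<^sub>v w"
proof (rule eq_vecI)
  let ?c = "complex_of_real t" and ?n = "dim_vec w"
  fix i assume "i < dim_vec (v - (?c * cinner w v) \<cdot>\<^sub>v w)"
  hence i: "i < ?n" by simp
  have "(id_minus_ketbra t w *\<^sub>v v) $ i
      = (\<Sum>j<?n. ((if i = j then 1 else 0) - ?c * (w$i * cnj (w$j))) * v$j)"
    using i assms by (simp add: id_minus_ketbra_def scalar_prod_def atLeast0LessThan)
  also have "\<dots> = (\<Sum>j<?n. (if j = i then v$i else 0) - ?c * w$i * (cnj (w$j) * v$j))"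
    by (rule sum.cong) (auto simp: algebra_simps)
  also have "\<dots> = (\<Sum>j<?n. (if j = i then v$i else 0)) - ?c * w$i * (\<Sum>j<?n. cnj (w$j) * v$j)"
    by (simp add: sum_subtractf sum_distrib_left)
  also have "\<dots> = (v - (?c * cinner w v) \<cdot>\<^sub>v w) $ i"
    using i assms by (simp add: cinner_def)
  finally show "(id_minus_ketbra t w *\<^sub>v v) $ i = (v - (?c * cinner w v) \<cdot>\<^sub>v w) $ i" .
qed (use assms in \<open>simp add: id_minus_ketbra_def\<close>)

lemma id_minus_ketbra_mult:
  "id_minus_ketbra a w * id_minus_ketbra b w = id_minus_ketbra (a + b - a * b * (vnorm w)\<^sup>2) w"
proof -
  let ?K = "ketbra w w" and ?n = "dim_vec w"
  let ?a = "complex_of_real a" and ?b = "complex_of_real b"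
  have K: "?K \<in> carrier_mat ?n ?n" by simp
  have aK: "?a \<cdot>\<^sub>m ?K \<in> carrier_mat ?n ?n" and bK: "?b \<cdot>\<^sub>m ?K \<in> carrier_mat ?n ?n"
    using K by simp_all
  have "id_minus_ketbra a w * id_minus_ketbra b w
      = (1\<^sub>m ?n - ?a \<cdot>\<^sub>m ?K) * 1\<^sub>m ?n - (1\<^sub>m ?n - ?a \<cdot>\<^sub>m ?K) * (?b \<cdot>\<^sub>m ?K)"
    unfolding id_minus_ketbra_def by (rule mult_minus_distrib_mat[OF minus_carrier_mat[OF aK] one_carrier_mat bK])
  also have "(1\<^sub>m ?n - ?a \<cdot>\<^sub>m ?K) * (?b \<cdot>\<^sub>m ?K) = ?b \<cdot>\<^sub>m ?K - (?a \<cdot>\<^sub>m ?K) * (?b \<cdot>\<^sub>m ?K)"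
    using minus_mult_distrib_mat[OF one_carrier_mat aK bK] left_mult_one_mat[OF bK] by simp
  also have "(?a \<cdot>\<^sub>m ?K) * (?b \<cdot>\<^sub>m ?K) = (?a * ?b * cinner w w) \<cdot>\<^sub>m ?K"
    using K by (simp add: smult_mult_smult_mat[OF K K] ketbra_ketbra smult_smult_mat)
  also have "(1\<^sub>m ?n - ?a \<cdot>\<^sub>m ?K) * 1\<^sub>m ?n - (?b \<cdot>\<^sub>m ?K - (?a * ?b * cinner w w) \<cdot>\<^sub>m ?K)
      = id_minus_ketbra (a + b - a * b * (vnorm w)\<^sup>2) w"
    using K by (intro eq_matI) (auto simp: id_minus_ketbra_def cinner_self algebra_simps)
  finally show ?thesis .
qed

lemma id_minus_ketbra_inverse:
  assumes "vnorm e = 1" "\<tau> \<noteq> 1"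
  shows "id_minus_ketbra \<tau> e * id_minus_ketbra (- \<tau> / (1 - \<tau>)) e = 1\<^sub>m (dim_vec e)"
proof -
  have "\<tau> + - \<tau> / (1 - \<tau>) - \<tau> * (- \<tau> / (1 - \<tau>)) * (vnorm e)\<^sup>2 = 0"
    using assms by (simp add: field_simps)
  thus ?thesis by (simp add: id_minus_ketbra_mult id_minus_ketbra_zero)
qed

lemma cinner_id_minus_ketbra:
  assumes "dim_vec y = dim_vec e"
  shows "cinner y (id_minus_ketbra \<tau> e *\<^sub>v y) = complex_of_real ((vnorm y)\<^sup>2 - \<tau> * (cmod (cinner e y))\<^sup>2)"
proof -
  have "cinner y (id_minus_ketbra \<tau> e *\<^sub>v y) = cinner y y - complex_of_real \<tau> * (cinner e y * cinner y e)"
    using assms by (simp add: id_minus_ketbra_mult_vec cinner_minus_right cinner_smult_right mult.assoc)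
  also have "cinner y e = cnj (cinner e y)" using cinner_conj_commute[of e y] assms by simp
  also have "cinner e y * cnj (cinner e y) = complex_of_real ((cmod (cinner e y))\<^sup>2)"
    by (rule complex_norm_square[symmetric])
  finally show ?thesis by (simp add: cinner_self)
qed

lemma hermitian_sandwich_id_minus_ketbra:
  assumes R: "R \<in> carrier_mat n n" "adj R = R" and e: "dim_vec e = n"
  shows "R * id_minus_ketbra t e * R = R * R - complex_of_real t \<cdot>\<^sub>m ketbra (R *\<^sub>v e) (R *\<^sub>v e)"
proof -
  let ?c = "complex_of_real t"
  have K: "ketbra e e \<in> carrier_mat n n" using e ketbra_carrier by metis
  have K': "ketbra (R *\<^sub>v e) e \<in> carrier_mat n n" using e R(1) ketbra_carrier[of "R *\<^sub>v e" e] by simp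
  have "R * id_minus_ketbra t e = R * 1\<^sub>m n - R * (?c \<cdot>\<^sub>m ketbra e e)"
    unfolding id_minus_ketbra_def e using R(1) K by (intro mult_minus_distrib_mat) auto
  also have "\<dots> = R - ?c \<cdot>\<^sub>m ketbra (R *\<^sub>v e) e"
    using R(1) K e by (simp add: mult_smult_distrib[OF R(1) K] mult_ketbra)
  finally have "R * id_minus_ketbra t e * R = (R - ?c \<cdot>\<^sub>m ketbra (R *\<^sub>v e) e) * R" by simp
  also have "\<dots> = R * R - (?c \<cdot>\<^sub>m ketbra (R *\<^sub>v e) e) * R"
    using R(1) K' by (intro minus_mult_distrib_mat) auto
  also have "(?c \<cdot>\<^sub>m ketbra (R *\<^sub>v e) e) * R = ?c \<cdot>\<^sub>m ketbra (R *\<^sub>v e) (R *\<^sub>v e)"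
    using R e K' by (simp add: mult_smult_assoc_mat[OF K' R(1)] ketbra_mult)
  finally show ?thesis .
qed

lemma bdd_above_opnorm:
  assumes A: "A \<in> carrier_mat n m"
  shows "bdd_above {vnorm (A *\<^sub>v x) | x. x \<in> carrier_vec (dim_col A) \<and> vnorm x = 1}"
proof (rule bdd_aboveI)
  fix r assume "r \<in> {vnorm (A *\<^sub>v x) | x. x \<in> carrier_vec (dim_col A) \<and> vnorm x = 1}"
  then obtain x where x: "x \<in> carrier_vec m" "vnorm x = 1" and r: "r = vnorm (A *\<^sub>v x)"
    using A by auto
  have row: "cmod ((A *\<^sub>v x) $ i) \<le> (\<Sum>j<m. cmod (A $$ (i,j)))" if "i < n" for i
  proof -
    have "cmod ((A *\<^sub>v x) $ i) = cmod (\<Sum>j<m. A $$ (i,j) * x $ j)"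
      using A x that by (simp add: scalar_prod_def atLeast0LessThan)
    also have "\<dots> \<le> (\<Sum>j<m. cmod (A $$ (i,j) * x $ j))" by (rule norm_sum)
    also have "\<dots> \<le> (\<Sum>j<m. cmod (A $$ (i,j)))"
      using cmod_index_le_vnorm[of _ x] x by (intro sum_mono) (auto simp: norm_mult intro!: mult_left_le)
    finally show ?thesis .
  qed
  have "dim_vec (A *\<^sub>v x) = n" using A by simp
  thus "r \<le> sqrt (\<Sum>i<n. (\<Sum>j<m. cmod (A $$ (i,j)))\<^sup>2)"
    unfolding r vnorm_def using row by (auto intro!: real_sqrt_le_mono sum_mono power_mono)
qed

lemma vnorm_mult_vec_le_opnorm:
  "A \<in> carrier_mat n m \<Longrightarrow> x \<in> carrier_vec m \<Longrightarrow> vnorm x = 1 \<Longrightarrow> vnorm (A *\<^sub>v x) \<le> opnorm A"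
  unfolding opnorm_def by (rule cSup_upper[OF _ bdd_above_opnorm]) auto

lemma quadratic_form_le_opnorm:
  assumes A: "A \<in> carrier_mat n n" and x: "x \<in> carrier_vec n" "vnorm x = 1"
  shows "Re (cinner x (A *\<^sub>v x)) \<le> opnorm A"
proof -
  have "(cmod (cinner x (A *\<^sub>v x)))\<^sup>2 \<le> (vnorm (A *\<^sub>v x))\<^sup>2"
    using A x by (intro cmod_cinner_unit_sq_le) auto
  hence "cmod (cinner x (A *\<^sub>v x)) \<le> vnorm (A *\<^sub>v x)" by (rule power2_le_imp_le) (rule vnorm_nonneg)
  thus ?thesis using complex_Re_le_cmod vnorm_mult_vec_le_opnorm[OF A x] by (meson order_trans)
qed

section \<open>Unitary matrices and the spectral theorem\<close>

definition unitary :: "nat \<Rightarrow> complex mat \<Rightarrow> bool" where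
  "unitary n U \<longleftrightarrow> U \<in> carrier_mat n n \<and> adj U * U = 1\<^sub>m n \<and> U * adj U = 1\<^sub>m n"

lemma unitary_carrier: "unitary n U \<Longrightarrow> U \<in> carrier_mat n n"
  by (simp add: unitary_def)

lemma unitary_adj_mult_cancel[simp]:
  assumes "unitary n U" "dim_row X = n"
  shows "adj U * (U * X) = X"
proof -
  have U: "U \<in> carrier_mat n n" "adj U \<in> carrier_mat n n" using assms(1) by (auto simp: unitary_def)
  have "X \<in> carrier_mat n (dim_col X)" using assms(2) by (intro carrier_matI) simp_all
  from assoc_mult_mat[OF U(2) U(1) this] have "adj U * (U * X) = (adj U * U) * X" by (rule sym)
  also have "\<dots> = X" using assms by (simp add: unitary_def)
  finally show ?thesis .
qed

lemma unitary_mult_adj_cancel[simp]: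
  assumes "unitary n U" "dim_row X = n"
  shows "U * (adj U * X) = X"
proof -
  have U: "U \<in> carrier_mat n n" "adj U \<in> carrier_mat n n" using assms(1) by (auto simp: unitary_def)
  have "X \<in> carrier_mat n (dim_col X)" using assms(2) by (intro carrier_matI) simp_all
  from assoc_mult_mat[OF U(1) U(2) this] have "U * (adj U * X) = (U * adj U) * X" by (rule sym)
  also have "\<dots> = X" using assms by (simp add: unitary_def)
  finally show ?thesis .
qed

lemma unitary_adj_mult_vec_cancel[simp]:
  assumes "unitary n U" "dim_vec x = n"
  shows "adj U *\<^sub>v (U *\<^sub>v x) = x"
proof -
  have U: "U \<in> carrier_mat n n" "adj U \<in> carrier_mat n n" using assms(1) by (auto simp: unitary_def)
  have x: "x \<in> carrier_vec n" using assms(2) by (rule carrier_vecI)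
  from assoc_mult_mat_vec[OF U(2) U(1) this] have "adj U *\<^sub>v (U *\<^sub>v x) = (adj U * U) *\<^sub>v x" by (rule sym)
  also have "\<dots> = x" using assms x by (simp add: unitary_def)
  finally show ?thesis .
qed

lemma unitary_mult_adj_vec_cancel[simp]:
  assumes "unitary n U" "dim_vec x = n"
  shows "U *\<^sub>v (adj U *\<^sub>v x) = x"
proof -
  have U: "U \<in> carrier_mat n n" "adj U \<in> carrier_mat n n" using assms(1) by (auto simp: unitary_def)
  have x: "x \<in> carrier_vec n" using assms(2) by (rule carrier_vecI)
  from assoc_mult_mat_vec[OF U(1) U(2) this] have "U *\<^sub>v (adj U *\<^sub>v x) = (U * adj U) *\<^sub>v x" by (rule sym)
  also have "\<dots> = x" using assms x by (simp add: unitary_def)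
  finally show ?thesis .
qed

lemma unitary_one: "unitary n (1\<^sub>m n)"
  by (simp add: unitary_def)

lemma unitary_adj: "unitary n U \<Longrightarrow> unitary n (adj U)"
  by (auto simp: unitary_def)

lemma unitary_mult:
  assumes U: "unitary n U" and V: "unitary n V"
  shows "unitary n (U * V)"
proof -
  have UV: "U \<in> carrier_mat n n" "V \<in> carrier_mat n n" using U V by (simp_all add: unitary_carrier)
  have aUV: "adj U \<in> carrier_mat n n" "adj V \<in> carrier_mat n n" using UV by auto
  have adj_UV: "adj (U * V) = adj V * adj U" using UV by (rule adj_mult)
  have "adj (U * V) * (U * V) = adj V * (adj U * (U * V))"
    unfolding adj_UV using UV by (intro assoc_mult_mat[of _ n n _ n _ n]) auto
  also have "\<dots> = adj V * V" using U UV by simp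
  also have "\<dots> = 1\<^sub>m n" using V by (simp add: unitary_def)
  finally have 1: "adj (U * V) * (U * V) = 1\<^sub>m n" .
  have "(U * V) * adj (U * V) = U * (V * (adj V * adj U))"
    unfolding adj_UV by (rule assoc_mult_mat[OF UV mult_carrier_mat[OF aUV(2) aUV(1)]])
  also have "\<dots> = U * adj U" using V UV by simp
  also have "\<dots> = 1\<^sub>m n" using U by (simp add: unitary_def)
  finally show ?thesis using 1 UV by (simp add: unitary_def)
qed

lemma one_smult_mat[simp]: "(1::complex) \<cdot>\<^sub>m A = A"
  by (intro eq_matI) auto

lemma unitary_smult:
  assumes U: "unitary n U" and \<alpha>: "cmod \<alpha> = 1"
  shows "unitary n (\<alpha> \<cdot>\<^sub>m U)"
proof -
  have UU: "U \<in> carrier_mat n n" "adj U \<in> carrier_mat n n" using U by (auto simp: unitary_def)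
  have "cnj \<alpha> * \<alpha> = 1" "\<alpha> * cnj \<alpha> = 1"
    using \<alpha> by (metis complex_norm_square mult.commute of_real_1 power_one)+
  hence "adj (\<alpha> \<cdot>\<^sub>m U) * (\<alpha> \<cdot>\<^sub>m U) = adj U * U" "(\<alpha> \<cdot>\<^sub>m U) * adj (\<alpha> \<cdot>\<^sub>m U) = U * adj U"
    by (simp_all add: adj_smult smult_mult_smult_mat[OF UU(2) UU(1)] smult_mult_smult_mat[OF UU(1) UU(2)]
        mult.commute)
  thus ?thesis using U by (simp add: unitary_def)
qed

lemma unitary_hermitian_involution:
  "H \<in> carrier_mat n n \<Longrightarrow> adj H = H \<Longrightarrow> H * H = 1\<^sub>m n \<Longrightarrow> unitary n H"
  by (simp add: unitary_def)

lemma cinner_unitary: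
  assumes U: "unitary n U" and "dim_vec x = n" "dim_vec y = n"
  shows "cinner (U *\<^sub>v x) (U *\<^sub>v y) = cinner x y"
proof -
  have "cinner (U *\<^sub>v x) (U *\<^sub>v y) = cinner (adj U *\<^sub>v (U *\<^sub>v x)) y"
    using assms unitary_carrier[OF U] by (intro cinner_adj[of U n n]) (auto intro: carrier_vecI)
  also have "adj U *\<^sub>v (U *\<^sub>v x) = x" using assms(1,2) by (rule unitary_adj_mult_vec_cancel)
  finally show ?thesis .
qed

lemma vnorm_unitary:
  assumes "unitary n U" "dim_vec x = n"
  shows "vnorm (U *\<^sub>v x) = vnorm x"
proof -
  have "complex_of_real ((vnorm (U *\<^sub>v x))\<^sup>2) = complex_of_real ((vnorm x)\<^sup>2)"
    using cinner_unitary[OF assms assms(2)] by (simp only: cinner_self)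
  hence "(vnorm (U *\<^sub>v x))\<^sup>2 = (vnorm x)\<^sup>2" by (simp only: of_real_eq_iff)
  thus ?thesis using vnorm_nonneg[of x] vnorm_nonneg[of "U *\<^sub>v x"] by (simp add: power2_eq_iff_nonneg)
qed

lemma vnorm_unitary_col:
  assumes "unitary n U" "i < n"
  shows "vnorm (U *\<^sub>v unit_vec n i) = 1"
  using cinner_unitary[OF assms(1), of "unit_vec n i" "unit_vec n i"] assms(2)
  by (simp add: vnorm_eq_1_iff cinner_unit_vec_left)

definition householder :: "complex vec \<Rightarrow> complex mat" where
  "householder w = id_minus_ketbra (2 / (vnorm w)\<^sup>2) w"

lemma unitary_householder:
  assumes w: "dim_vec w = n" "w \<noteq> 0\<^sub>v n"
  shows "unitary n (householder w)"
proof (rule unitary_hermitian_involution)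
  have "vnorm w \<noteq> 0" using w vnorm_eq_0_iff by metis
  hence "2 / (vnorm w)\<^sup>2 + 2 / (vnorm w)\<^sup>2 - 2 / (vnorm w)\<^sup>2 * (2 / (vnorm w)\<^sup>2) * (vnorm w)\<^sup>2 = 0"
    by (simp add: field_simps power2_eq_square)
  thus "householder w * householder w = 1\<^sub>m n"
    unfolding householder_def id_minus_ketbra_mult using w(1) by (simp only: id_minus_ketbra_zero)
  show "householder w \<in> carrier_mat n n" unfolding householder_def using w(1) by (rule id_minus_ketbra_carrier)
  show "adj (householder w) = householder w" by (simp add: householder_def adj_id_minus_ketbra)
qed

lemma householder_swap:
  assumes dims: "dim_vec x = n" "dim_vec u = n"
    and eq: "vnorm x = vnorm u" "cinner x u = cinner u x" and "x \<noteq> u"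
  shows "householder (x - u) *\<^sub>v x = u"
proof -
  define w where "w = x - u"
  have dw: "dim_vec w = n" using dims by (simp add: w_def)
  have "w \<noteq> 0\<^sub>v n" using \<open>x \<noteq> u\<close> dims by (auto simp: w_def vec_eq_iff)
  hence "vnorm w \<noteq> 0" using dw vnorm_eq_0_iff by metis
  have "cinner x x = cinner u u" using eq(1) by (simp add: cinner_self)
  hence "cinner w w = 2 * cinner w x"
    using dims eq(2) by (simp add: w_def cinner_minus_left cinner_minus_right)
  hence ww: "complex_of_real ((vnorm w)\<^sup>2) = 2 * cinner w x"
    by (simp only: cinner_self)
  have "complex_of_real (2 / (vnorm w)\<^sup>2) * cinner w x
      = (2 * cinner w x) / complex_of_real ((vnorm w)\<^sup>2)"
    by (simp add: of_real_divide)
  also have "\<dots> = 1" unfolding ww[symmetric] using \<open>vnorm w \<noteq> 0\<close> by simp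
  finally have "complex_of_real (2 / (vnorm w)\<^sup>2) * cinner w x = 1" .
  hence "householder w *\<^sub>v x = x - w"
    using dw dims by (simp add: householder_def id_minus_ketbra_mult_vec)
  thus ?thesis using dims by (auto simp: w_def)
qed

lemma unitary_map_vec:
  assumes x: "dim_vec x = n" and u: "dim_vec u = n"
    and eq: "vnorm x = vnorm u" "cinner x u = cinner u x"
  obtains H where "unitary n H" "H *\<^sub>v x = u"
proof (cases "x = u")
  case True
  show ?thesis
  proof (rule that[OF unitary_one])
    show "1\<^sub>m n *\<^sub>v x = u" using True x one_mult_mat_vec[of x n] carrier_vecI by metis
  qed
next
  case False
  hence "x - u \<noteq> 0\<^sub>v n" using x u by (auto simp: vec_eq_iff)
  with x u have "unitary n (householder (x - u))" by (intro unitary_householder) auto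
  thus ?thesis using that householder_swap[OF x u eq False] by blast
qed

lemma unit_phase:
  obtains \<alpha> :: complex where "cmod \<alpha> = 1" "\<alpha> * cnj z = complex_of_real (cmod z)"
proof (cases "z = 0")
  case False
  have "z * cnj z = complex_of_real (cmod z) * complex_of_real (cmod z)"
    by (metis complex_norm_square of_real_mult power2_eq_square)
  thus ?thesis using that[of "z / complex_of_real (cmod z)"] False by (simp add: norm_divide field_simps)
qed (use that[of 1] in simp)

lemma unitary_with_first_column:
  assumes u: "dim_vec u = n" "0 < n" "vnorm u = 1"
  obtains W where "unitary n W" "W *\<^sub>v unit_vec n 0 = u"
proof -
  obtain \<alpha> where \<alpha>: "cmod \<alpha> = 1" "\<alpha> * cnj (u $ 0) = complex_of_real (cmod (u $ 0))"
    by (rule unit_phase)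
  define x where "x = \<alpha> \<cdot>\<^sub>v unit_vec n 0"
  \<comment> \<open>the phase makes \<open>cinner u x\<close> real, so a Householder reflection maps \<open>x\<close> to \<open>u\<close>\<close>
  have x: "dim_vec x = n" by (simp add: x_def)
  have "cinner u x = complex_of_real (cmod (u $ 0))"
    using u \<alpha> by (simp add: x_def cinner_smult_right cinner_unit_vec_right)
  hence "cinner x u = cinner u x" using cinner_conj_commute[of u x] x u by simp
  moreover have "vnorm x = vnorm u" using u \<alpha> by (simp add: x_def vnorm_smult vnorm_unit_vec)
  ultimately obtain H where H: "unitary n H" "H *\<^sub>v x = u"
    using unitary_map_vec[OF x u(1)] by metis
  have "unitary n (\<alpha> \<cdot>\<^sub>m H)" using H(1) \<alpha>(1) by (rule unitary_smult)
  moreover have "(\<alpha> \<cdot>\<^sub>m H) *\<^sub>v unit_vec n 0 = u"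
    using smult_mat_mult_vec[OF unitary_carrier[OF H(1)] unit_vec_carrier, of \<alpha> 0] H(2)
    by (simp add: x_def)
  ultimately show ?thesis by (rule that)
qed

definition scalar_block :: "complex \<Rightarrow> complex mat \<Rightarrow> complex mat" where
  "scalar_block a X = mat (Suc (dim_row X)) (Suc (dim_col X))
     (\<lambda>(i,j). if i = 0 \<and> j = 0 then a else if i = 0 \<or> j = 0 then 0 else X $$ (i - 1, j - 1))"

lemma dim_scalar_block[simp]:
  "dim_row (scalar_block a X) = Suc (dim_row X)" "dim_col (scalar_block a X) = Suc (dim_col X)"
  by (simp_all add: scalar_block_def)

lemma index_scalar_block[simp]:
  "i < Suc (dim_row X) \<Longrightarrow> j < Suc (dim_col X) \<Longrightarrow> scalar_block a X $$ (i,j) =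
    (if i = 0 \<and> j = 0 then a else if i = 0 \<or> j = 0 then 0 else X $$ (i - 1, j - 1))"
  by (simp add: scalar_block_def)

lemma scalar_block_mult:
  assumes "dim_col X = dim_row Y"
  shows "scalar_block a X * scalar_block b Y = scalar_block (a * b) (X * Y)"
proof (rule eq_matI)
  fix i j assume "i < dim_row (scalar_block (a * b) (X * Y))" "j < dim_col (scalar_block (a * b) (X * Y))"
  hence ij: "i < Suc (dim_row X)" "j < Suc (dim_col Y)" by auto
  have "(scalar_block a X * scalar_block b Y) $$ (i,j)
      = (\<Sum>k<Suc (dim_col X). scalar_block a X $$ (i,k) * scalar_block b Y $$ (k,j))"
    using ij assms by (simp add: scalar_prod_def atLeast0LessThan)
  also have "\<dots> = scalar_block a X $$ (i,0) * scalar_block b Y $$ (0,j)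
      + (\<Sum>k<dim_col X. scalar_block a X $$ (i,Suc k) * scalar_block b Y $$ (Suc k,j))"
    by (rule sum.lessThan_Suc_shift)
  also have "\<dots> = scalar_block (a * b) (X * Y) $$ (i,j)"
    using ij assms by (cases i; cases j) (auto simp: scalar_prod_def atLeast0LessThan)
  finally show "(scalar_block a X * scalar_block b Y) $$ (i,j) = scalar_block (a * b) (X * Y) $$ (i,j)" .
qed auto

lemma adj_scalar_block: "adj (scalar_block a X) = scalar_block (cnj a) (adj X)"
  by (rule eq_matI) auto

lemma scalar_block_one: "scalar_block 1 (1\<^sub>m m) = 1\<^sub>m (Suc m)"
  by (rule eq_matI) auto

lemma dim_mat_diag[simp]: "dim_row (mat_diag n d) = n" "dim_col (mat_diag n d) = n"
  by (simp_all add: mat_diag_def)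

lemma mat_diag_mult_vec:
  "v \<in> carrier_vec n \<Longrightarrow> mat_diag n d *\<^sub>v v = vec n (\<lambda>i. d i * v $ i)"
  by (intro eq_vecI)
    (auto simp: mat_diag_def scalar_prod_def atLeast0LessThan if_distrib[of "\<lambda>x. x * _"] cong: if_cong)

lemma mat_diag_Suc: "mat_diag (Suc m) f = scalar_block (f 0) (mat_diag m (\<lambda>i. f (Suc i)))"
  by (rule eq_matI) (auto simp: mat_diag_def nat.split)

lemma unitary_scalar_block:
  assumes "unitary m U"
  shows "unitary (Suc m) (scalar_block 1 U)"
  using assms
  by (auto simp: unitary_def adj_scalar_block scalar_block_mult scalar_block_one intro!: carrier_matI)

lemma eigenvector_exists:
  assumes A: "A \<in> carrier_mat n n" and "0 < n"
  obtains a u where "dim_vec u = n" "vnorm u = 1" "A *\<^sub>v u = a \<cdot>\<^sub>v u"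
proof -
  obtain as where cp: "char_poly A = (\<Prod>a\<leftarrow>as. [:- a, 1:])" and "length as = n"
    using char_poly_factorized[OF A] by blast
  with \<open>0 < n\<close> obtain a rest where "as = a # rest" by (cases as) auto
  hence "eigenvalue A a" using eigenvalue_root_char_poly[OF A] cp by simp
  then obtain v where v: "v \<in> carrier_vec n" "v \<noteq> 0\<^sub>v n" "A *\<^sub>v v = a \<cdot>\<^sub>v v"
    unfolding eigenvalue_def eigenvector_def using A by auto
  hence "vnorm v \<noteq> 0" using vnorm_eq_0_iff by auto
  define u where "u = complex_of_real (1 / vnorm v) \<cdot>\<^sub>v v"
  have "dim_vec u = n" using v(1) by (simp add: u_def)
  moreover have "vnorm u = 1"
    using \<open>vnorm v \<noteq> 0\<close> vnorm_nonneg[of v] by (simp add: u_def vnorm_smult norm_divide)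
  moreover have "A *\<^sub>v u = a \<cdot>\<^sub>v u"
    using v A by (simp add: u_def mult_mat_vec smult_smult_assoc mult.commute)
  ultimately show ?thesis by (rule that)
qed

lemma hermitian_unitary_conj:
  assumes W: "unitary n W" and A: "A \<in> carrier_mat n n" "adj A = A"
  shows "adj (adj W * A * W) = adj W * A * W"
proof -
  have W': "W \<in> carrier_mat n n" "adj W \<in> carrier_mat n n" using W by (auto simp: unitary_def)
  have "adj (adj W * A * W) = adj W * adj (adj W * A)"
    using W' A by (intro adj_mult[of _ n n _ n]) auto
  also have "adj (adj W * A) = A * W"
    using W' A by (subst adj_mult[of _ n n _ n]) auto
  finally show ?thesis using W' A by (simp add: assoc_mult_mat[of _ n n _ n _ n])
qed

lemma hermitian_deflate:
  assumes A: "A \<in> carrier_mat (Suc m) (Suc m)" "adj A = A"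
    and col0: "A *\<^sub>v unit_vec (Suc m) 0 = a \<cdot>\<^sub>v unit_vec (Suc m) 0"
  obtains X where "X \<in> carrier_mat m m" "adj X = X" "A = scalar_block (complex_of_real (Re a)) X"
proof -
  have first_col: "A $$ (i, 0) = (if i = 0 then a else 0)" if "i < Suc m" for i
  proof -
    have "A $$ (i, 0) = (a \<cdot>\<^sub>v unit_vec (Suc m) 0) $ i"
      unfolding col0[symmetric] using A(1) that by (simp add: mult_unit_vec_index)
    thus ?thesis using that by simp
  qed
  have A_sym: "A $$ (i, j) = cnj (A $$ (j, i))" if "i < Suc m" "j < Suc m" for i j
  proof -
    have "A $$ (i, j) = adj A $$ (i, j)" using A(2) by simp
    also have "\<dots> = cnj (A $$ (j, i))" using A(1) that by simp
    finally show ?thesis .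
  qed
  have "A $$ (0, 0) = a" using first_col[of 0] by simp
  hence "cnj a = a" using A_sym[OF zero_less_Suc zero_less_Suc] by metis
  hence a: "complex_of_real (Re a) = a" by (metis Reals_cnj_iff complex_is_Real_iff of_real_Re)
  have first_row: "A $$ (0, j) = (if j = 0 then a else 0)" if "j < Suc m" for j
    using A_sym[of 0 j] first_col[OF that] \<open>cnj a = a\<close> that by simp
  define X where "X = mat m m (\<lambda>(i,j). A $$ (Suc i, Suc j))"
  have "adj X = X"
  proof (rule eq_matI)
    fix i j assume "i < dim_row X" "j < dim_col X"
    thus "adj X $$ (i, j) = X $$ (i, j)" using A_sym[of "Suc i" "Suc j"] by (simp add: X_def)
  qed (simp_all add: X_def)
  moreover have "A = scalar_block (complex_of_real (Re a)) X"
    using A first_col first_row a by (intro eq_matI) (auto simp: X_def)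
  moreover have "X \<in> carrier_mat m m" by (simp add: X_def)
  ultimately show ?thesis using that by blast
qed

lemma unitary_conj_first_col:
  assumes W: "unitary n W" "W *\<^sub>v unit_vec n 0 = u"
    and A: "A \<in> carrier_mat n n" and eig: "A *\<^sub>v u = a \<cdot>\<^sub>v u"
  shows "(adj W * A * W) *\<^sub>v unit_vec n 0 = a \<cdot>\<^sub>v unit_vec n 0"
proof -
  have W': "W \<in> carrier_mat n n" "adj W \<in> carrier_mat n n" using W(1) by (auto simp: unitary_def)
  have u: "u \<in> carrier_vec n" unfolding W(2)[symmetric] using W'(1) by simp
  have "(adj W * A * W) *\<^sub>v unit_vec n 0 = (adj W * A) *\<^sub>v (W *\<^sub>v unit_vec n 0)"
    by (rule assoc_mult_mat_vec[OF mult_carrier_mat[OF W'(2) A] W'(1)]) simp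
  also have "\<dots> = adj W *\<^sub>v (A *\<^sub>v u)"
    unfolding W(2) using W'(2) A u by (rule assoc_mult_mat_vec)
  also have "\<dots> = a \<cdot>\<^sub>v (adj W *\<^sub>v u)"
    unfolding eig using W'(2) u by (rule mult_mat_vec)
  also have "adj W *\<^sub>v u = unit_vec n 0"
    unfolding W(2)[symmetric] using W(1) by simp
  finally show ?thesis .
qed

definition unitary_diag :: "nat \<Rightarrow> complex mat \<Rightarrow> (nat \<Rightarrow> real) \<Rightarrow> complex mat" where
  "unitary_diag n U f = U * mat_diag n (\<lambda>i. complex_of_real (f i)) * adj U"

lemma unitary_diag_Suc:
  assumes W: "unitary (Suc m) W" and V: "unitary m V"
  shows "W * scalar_block (complex_of_real c) (unitary_diag m V g) * adj W
       = unitary_diag (Suc m) (W * scalar_block 1 V) (\<lambda>i. if i = 0 then c else g (i - 1))"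
proof -
  let ?D = "mat_diag m (\<lambda>i. complex_of_real (g i))" and ?c = "complex_of_real c"
  have W': "W \<in> carrier_mat (Suc m) (Suc m)" using W by (rule unitary_carrier)
  have dims: "dim_row W = Suc m" "dim_col W = Suc m" "dim_row V = m" "dim_col V = m"
    using W' unitary_carrier[OF V] by auto
  have "mat_diag (Suc m) (\<lambda>i. complex_of_real (if i = 0 then c else g (i - 1))) = scalar_block ?c ?D"
    by (simp add: mat_diag_Suc)
  moreover have "adj (W * scalar_block 1 V) = scalar_block 1 (adj V) * adj W"
    using adj_mult[OF W' unitary_carrier[OF unitary_scalar_block[OF V]]] by (simp add: adj_scalar_block)
  ultimately have "unitary_diag (Suc m) (W * scalar_block 1 V) (\<lambda>i. if i = 0 then c else g (i - 1))
      = W * scalar_block 1 V * scalar_block ?c ?D * (scalar_block 1 (adj V) * adj W)"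
    by (simp add: unitary_diag_def)
  also have "\<dots> = W * (scalar_block 1 V * scalar_block ?c ?D * scalar_block 1 (adj V)) * adj W"
    by (simp add: assoc_mult_mat_dim dims)
  also have "scalar_block 1 V * scalar_block ?c ?D * scalar_block 1 (adj V)
      = scalar_block ?c (unitary_diag m V g)"
    by (simp add: scalar_block_mult dims unitary_diag_def)
  finally show ?thesis by simp
qed

theorem hermitian_unitary_diag:
  "A \<in> carrier_mat n n \<Longrightarrow> adj A = A \<Longrightarrow> \<exists>U f. unitary n U \<and> A = unitary_diag n U f"
proof (induction n arbitrary: A)
  case 0
  hence "A = unitary_diag 0 (1\<^sub>m 0) (\<lambda>_. 0)" by (intro eq_matI) (auto simp: unitary_diag_def)
  thus ?case using unitary_one by blast
next
  case (Suc m)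
  obtain a u where u: "dim_vec u = Suc m" "vnorm u = 1" "A *\<^sub>v u = a \<cdot>\<^sub>v u"
    using eigenvector_exists[OF Suc.prems(1) zero_less_Suc] by blast
  obtain W where W: "unitary (Suc m) W" "W *\<^sub>v unit_vec (Suc m) 0 = u"
    using unitary_with_first_column[OF u(1) _ u(2)] by auto
  have W': "W \<in> carrier_mat (Suc m) (Suc m)" "adj W \<in> carrier_mat (Suc m) (Suc m)"
    using W(1) by (auto simp: unitary_def)
  define B where "B = adj W * A * W"
  have "B \<in> carrier_mat (Suc m) (Suc m)" "adj B = B"
    using W' Suc.prems hermitian_unitary_conj[OF W(1) Suc.prems] by (auto simp: B_def)
  then obtain X where X: "X \<in> carrier_mat m m" "adj X = X"
    and BX: "B = scalar_block (complex_of_real (Re a)) X"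
    using hermitian_deflate unitary_conj_first_col[OF W Suc.prems(1) u(3)] unfolding B_def by metis
  obtain V g where V: "unitary m V" "X = unitary_diag m V g" using Suc.IH[OF X] by blast
  have "W * B * adj W = A"
    using W' Suc.prems(1) W(1) by (simp add: B_def assoc_mult_mat_dim unitary_def)
  hence "A = unitary_diag (Suc m) (W * scalar_block 1 V) (\<lambda>i. if i = 0 then Re a else g (i - 1))"
    using unitary_diag_Suc[OF W(1) V(1)] BX V(2) by simp
  thus ?case using unitary_mult[OF W(1) unitary_scalar_block[OF V(1)]] by blast
qed

section \<open>Square roots, inverses and eigenvalues of positive matrices\<close>

lemma unitary_diag_carrier: "unitary n U \<Longrightarrow> unitary_diag n U f \<in> carrier_mat n n"
  using unitary_carrier[of n U] by (auto simp: unitary_diag_def intro!: mult_carrier_mat)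

lemma adj_unitary_diag:
  assumes "unitary n U"
  shows "adj (unitary_diag n U f) = unitary_diag n U f"
proof -
  let ?D = "mat_diag n (\<lambda>i. complex_of_real (f i))"
  have U: "U \<in> carrier_mat n n" using assms by (rule unitary_carrier)
  have "adj ?D = ?D" by (intro eq_matI) (auto simp: mat_diag_def)
  moreover have "adj (U * ?D * adj U) = adj (adj U) * adj (U * ?D)"
    using U by (intro adj_mult[of _ n n _ n]) auto
  moreover have "adj (U * ?D) = adj ?D * adj U"
    using U by (intro adj_mult[of _ n n _ n]) auto
  ultimately show ?thesis using carrier_matD[OF U] by (simp add: unitary_diag_def assoc_mult_mat_dim)
qed

lemma unitary_diag_mult:
  assumes "unitary n U"
  shows "unitary_diag n U f * unitary_diag n U g = unitary_diag n U (\<lambda>i. f i * g i)"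
proof -
  have U: "U \<in> carrier_mat n n" using assms by (rule unitary_carrier)
  let ?Df = "mat_diag n (\<lambda>i. complex_of_real (f i))" and ?Dg = "mat_diag n (\<lambda>i. complex_of_real (g i))"
  have dims: "dim_row U = n" "dim_col U = n" using U by auto
  have "unitary_diag n U f * unitary_diag n U g = U * (?Df * (adj U * (U * (?Dg * adj U))))"
    by (simp add: unitary_diag_def assoc_mult_mat_dim dims)
  also have "adj U * (U * (?Dg * adj U)) = ?Dg * adj U" using assms by (rule unitary_adj_mult_cancel) simp
  also have "?Df * (?Dg * adj U) = (?Df * ?Dg) * adj U" by (rule assoc_mult_mat_dim[symmetric]) (simp_all add: dims)
  finally show ?thesis by (simp add: unitary_diag_def assoc_mult_mat_dim dims)
qed

lemma unitary_diag_cong: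
  assumes "\<And>i. i < n \<Longrightarrow> f i = g i"
  shows "unitary_diag n U f = unitary_diag n U g"
proof -
  have "mat_diag n (\<lambda>i. complex_of_real (f i)) = mat_diag n (\<lambda>i. complex_of_real (g i))"
    using assms by (intro eq_matI) (auto simp: mat_diag_def)
  thus ?thesis by (simp add: unitary_diag_def)
qed

lemma unitary_diag_one:
  assumes "unitary n U"
  shows "unitary_diag n U (\<lambda>_. 1) = 1\<^sub>m n"
proof -
  have "U * adj U = 1\<^sub>m n" "dim_col U = n" using assms by (auto simp: unitary_def)
  thus ?thesis by (simp add: unitary_diag_def)
qed

lemma unitary_diag_mult_vec:
  assumes "unitary n U" "dim_vec x = n"
  shows "unitary_diag n U f *\<^sub>v x = U *\<^sub>v (mat_diag n (\<lambda>i. complex_of_real (f i)) *\<^sub>v (adj U *\<^sub>v x))"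
  using assms carrier_matD[OF unitary_carrier[OF assms(1)]]
  by (simp add: unitary_diag_def assoc_mult_mat_vec_dim)

lemma cinner_unitary_diag:
  assumes U: "unitary n U" and x: "dim_vec x = n"
  shows "cinner x (unitary_diag n U f *\<^sub>v x) = complex_of_real (\<Sum>i<n. f i * (cmod ((adj U *\<^sub>v x) $ i))\<^sup>2)"
proof -
  define y where "y = adj U *\<^sub>v x"
  have y: "y \<in> carrier_vec n"
    unfolding y_def using adj_carrier_mat[OF unitary_carrier[OF U]] carrier_vecI[OF x] by (rule mult_mat_vec_carrier)
  have "cinner x (unitary_diag n U f *\<^sub>v x)
      = cinner y (mat_diag n (\<lambda>i. complex_of_real (f i)) *\<^sub>v y)"
    using cinner_adj[OF unitary_carrier[OF U] carrier_vecI[OF x] mult_mat_vec_carrier[OF mat_diag_dim y]]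
    by (simp add: unitary_diag_mult_vec[OF U x] y_def)
  also have "\<dots> = (\<Sum>i<n. complex_of_real (f i) * (cnj (y $ i) * y $ i))"
    using y by (simp add: mat_diag_mult_vec cinner_def mult_ac)
  also have "\<dots> = complex_of_real (\<Sum>i<n. f i * (cmod (y $ i))\<^sup>2)"
    by (simp only: cnj_mult_self of_real_mult of_real_sum)
  finally show ?thesis by (simp add: y_def)
qed

lemma unitary_diag_mult_col:
  assumes U: "unitary n U" and i: "i < n"
  shows "unitary_diag n U f *\<^sub>v (U *\<^sub>v unit_vec n i) = complex_of_real (f i) \<cdot>\<^sub>v (U *\<^sub>v unit_vec n i)"
proof -
  have dims: "dim_row U = n" "dim_col U = n" using carrier_matD[OF unitary_carrier[OF U]] by auto
  have "adj U *\<^sub>v (U *\<^sub>v unit_vec n i) = unit_vec n i" using U by simp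
  moreover have "mat_diag n (\<lambda>i. complex_of_real (f i)) *\<^sub>v unit_vec n i = complex_of_real (f i) \<cdot>\<^sub>v unit_vec n i"
    using i by (auto simp: mat_diag_mult_vec intro!: eq_vecI)
  ultimately show ?thesis
    using unitary_carrier[OF U] by (simp add: unitary_diag_mult_vec[OF U] dims mult_mat_vec)
qed

lemma cinner_unitary_diag_col:
  assumes "unitary n U" "i < n"
  shows "cinner (U *\<^sub>v unit_vec n i) (unitary_diag n U f *\<^sub>v (U *\<^sub>v unit_vec n i)) = complex_of_real (f i)"
  using vnorm_unitary_col[OF assms]
  by (simp add: unitary_diag_mult_col[OF assms] cinner_smult_right vnorm_eq_1_iff)

lemma positive_op_unitary_diag:
  assumes U: "unitary n U" and f: "\<And>i. i < n \<Longrightarrow> 0 \<le> f i"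
  shows "positive_op n (unitary_diag n U f)"
  unfolding positive_op_def
proof (intro conjI ballI)
  fix x :: "complex vec" assume "x \<in> carrier_vec n"
  thus "0 \<le> Re (cinner x (unitary_diag n U f *\<^sub>v x))"
    using U f by (auto simp: cinner_unitary_diag carrier_vecD intro!: sum_nonneg)
qed (use U in \<open>simp_all add: unitary_diag_carrier adj_unitary_diag\<close>)

lemma strictly_positive_diagonalise:
  assumes "strictly_positive n A"
  obtains U f where "unitary n U" "A = unitary_diag n U f" "\<And>i. i < n \<Longrightarrow> 0 < f i"
proof -
  obtain U f where U: "unitary n U" "A = unitary_diag n U f"
    using assms hermitian_unitary_diag unfolding strictly_positive_def by blast
  have "0 < f i" if i: "i < n" for i
  proof -
    have "U *\<^sub>v unit_vec n i \<noteq> 0\<^sub>v n"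
      using vnorm_unitary_col[OF U(1) i] by auto
    thus ?thesis
      using assms U cinner_unitary_diag_col[OF U(1) i, of f] unitary_carrier[OF U(1)]
      unfolding strictly_positive_def by (metis Re_complex_of_real mult_mat_vec_carrier unit_vec_carrier)
  qed
  with U that show ?thesis by blast
qed

lemma positive_op_sqrt_eigenvector:
  assumes S: "positive_op n S" and x: "dim_vec x = n"
    and eq: "S *\<^sub>v (S *\<^sub>v x) = complex_of_real \<mu> \<cdot>\<^sub>v x" and \<mu>: "0 \<le> \<mu>"
  shows "S *\<^sub>v x = complex_of_real (sqrt \<mu>) \<cdot>\<^sub>v x"
proof -
  have Sc: "S \<in> carrier_mat n n" and hS: "adj S = S"
    and psd: "\<And>z. z \<in> carrier_vec n \<Longrightarrow> 0 \<le> Re (cinner z (S *\<^sub>v z))"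
    using S unfolding positive_op_def by auto
  have xc: "x \<in> carrier_vec n" using x by (rule carrier_vecI)
  have Sx: "S *\<^sub>v x \<in> carrier_vec n" using Sc xc by simp
  define r where "r = sqrt \<mu>"
  have r: "0 \<le> r" "r * r = \<mu>" using \<mu> by (simp_all add: r_def)
  show ?thesis
  proof (cases "r = 0")
    case True
    have "cinner (S *\<^sub>v x) (S *\<^sub>v x) = cinner x (S *\<^sub>v (S *\<^sub>v x))"
      using cinner_hermitian[OF Sc hS xc Sx] by simp
    also have "\<dots> = 0" using True r by (simp add: eq cinner_smult_right)
    finally have "S *\<^sub>v x = 0\<^sub>v n" using vnorm_eq_0_iff[of "S *\<^sub>v x"] Sc by (simp add: cinner_self)
    thus ?thesis using True x by (auto simp: r_def vec_eq_iff)
  next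
    case False
    \<comment> \<open>\<open>S y = - r y\<close>, which the positivity of \<open>S\<close> only allows for \<open>y = 0\<close>\<close>
    define y where "y = S *\<^sub>v x - complex_of_real r \<cdot>\<^sub>v x"
    have y: "y \<in> carrier_vec n" using Sx xc by (simp add: y_def)
    have "S *\<^sub>v y = S *\<^sub>v (S *\<^sub>v x) - complex_of_real r \<cdot>\<^sub>v (S *\<^sub>v x)"
      using Sc Sx xc by (simp add: y_def mult_minus_distrib_mat_vec mult_mat_vec)
    also have "\<dots> = - (complex_of_real r \<cdot>\<^sub>v y)"
      using carrier_vecD[OF Sx] carrier_vecD[OF xc] carrier_matD[OF Sc]
      by (intro eq_vecI) (auto simp: eq y_def algebra_simps simp flip: r(2))
    finally have "Re (cinner y (S *\<^sub>v y)) = - r * (vnorm y)\<^sup>2"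
      by (simp add: cinner_uminus_right cinner_smult_right cinner_self)
    moreover have "0 \<le> Re (cinner y (S *\<^sub>v y))" using psd y by blast
    ultimately have "vnorm y = 0" using r False by (simp add: mult_le_0_iff)
    hence "y = 0\<^sub>v n" using vnorm_eq_0_iff[of y] y by simp
    thus ?thesis using Sx xc carrier_matD[OF Sc] by (auto simp: y_def r_def vec_eq_iff)
  qed
qed

lemma mat_eq_on_unitary_cols:
  assumes U: "unitary n U" and A: "A \<in> carrier_mat n n" and B: "B \<in> carrier_mat n n"
    and cols: "\<And>j. j < n \<Longrightarrow> A *\<^sub>v (U *\<^sub>v unit_vec n j) = B *\<^sub>v (U *\<^sub>v unit_vec n j)"
  shows "A = B"
proof -
  have Uc: "U \<in> carrier_mat n n" using U by (rule unitary_carrier)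
  have col: "(C * U) $$ (i, j) = (C *\<^sub>v (U *\<^sub>v unit_vec n j)) $ i"
    if "C \<in> carrier_mat n n" "i < n" "j < n" for C i j
    using mult_unit_vec_index[of "C * U" n n i j] that Uc by simp
  have AU: "A * U = B * U"
  proof (rule eq_matI)
    fix i j assume "i < dim_row (B * U)" "j < dim_col (B * U)"
    hence ij: "i < n" "j < n" using B Uc by auto
    show "(A * U) $$ (i, j) = (B * U) $$ (i, j)"
      by (simp only: col[OF A ij] col[OF B ij] cols[OF ij(2)])
  qed (use A B Uc in auto)
  have "U * adj U = 1\<^sub>m n" using U by (simp add: unitary_def)
  hence "C = (C * U) * adj U" if "C \<in> carrier_mat n n" for C
    using assoc_mult_mat[OF that Uc adj_carrier_mat[OF Uc]] that by simp
  thus ?thesis using A B AU by metis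
qed

lemma msqrt_unitary_diag:
  assumes U: "unitary n U" and f: "\<And>i. i < n \<Longrightarrow> 0 \<le> f i"
  shows "msqrt (unitary_diag n U f) = unitary_diag n U (\<lambda>i. sqrt (f i))"
proof -
  let ?A = "unitary_diag n U f" and ?R = "unitary_diag n U (\<lambda>i. sqrt (f i))"
  have "?R * ?R = unitary_diag n U (\<lambda>i. sqrt (f i) * sqrt (f i))" by (rule unitary_diag_mult[OF U])
  also have "\<dots> = ?A" using f by (intro unitary_diag_cong) simp
  finally have R: "positive_op n ?R \<and> ?R * ?R = ?A"
    using positive_op_unitary_diag[OF U, of "\<lambda>i. sqrt (f i)"] f by simp
  have "S = ?R" if S: "positive_op n S" "S * S = ?A" for S
  proof (rule mat_eq_on_unitary_cols[OF U])
    show Sc: "S \<in> carrier_mat n n" using S(1) by (simp add: positive_op_def)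
    show "?R \<in> carrier_mat n n" using U by (rule unitary_diag_carrier)
    fix j assume j: "j < n"
    have u: "U *\<^sub>v unit_vec n j \<in> carrier_vec n" using unitary_carrier[OF U] by simp
    have "S *\<^sub>v (S *\<^sub>v (U *\<^sub>v unit_vec n j)) = complex_of_real (f j) \<cdot>\<^sub>v (U *\<^sub>v unit_vec n j)"
      using assoc_mult_mat_vec[OF Sc Sc u] unitary_diag_mult_col[OF U j] S(2) by simp
    hence "S *\<^sub>v (U *\<^sub>v unit_vec n j) = complex_of_real (sqrt (f j)) \<cdot>\<^sub>v (U *\<^sub>v unit_vec n j)"
      using carrier_vecD[OF u] f[OF j] by (intro positive_op_sqrt_eigenvector[OF S(1)]) auto
    thus "S *\<^sub>v (U *\<^sub>v unit_vec n j) = ?R *\<^sub>v (U *\<^sub>v unit_vec n j)"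
      by (simp add: unitary_diag_mult_col[OF U j])
  qed
  moreover have "dim_row ?A = n" using unitary_diag_carrier[OF U] by auto
  ultimately show ?thesis unfolding msqrt_def using R by (intro the_equality) auto
qed

lemma minv_unitary_diag:
  assumes U: "unitary n U" and f: "\<And>i. i < n \<Longrightarrow> f i \<noteq> 0"
  shows "minv (unitary_diag n U f) = unitary_diag n U (\<lambda>i. 1 / f i)"
proof -
  have "unitary_diag n U f * unitary_diag n U (\<lambda>i. 1 / f i) = unitary_diag n U (\<lambda>i. f i * (1 / f i))"
    by (rule unitary_diag_mult[OF U])
  also have "\<dots> = unitary_diag n U (\<lambda>_. 1)" using f by (intro unitary_diag_cong) simp
  finally have "unitary_diag n U f * unitary_diag n U (\<lambda>i. 1 / f i) = 1\<^sub>m n"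
    using unitary_diag_one[OF U] by simp
  moreover have "dim_row (unitary_diag n U f) = n" using unitary_diag_carrier[OF U] by auto
  ultimately show ?thesis using unitary_diag_carrier[OF U] by (intro minv_eqI) auto
qed

lemma minvsqrt_unitary_diag:
  assumes U: "unitary n U" and f: "\<And>i. i < n \<Longrightarrow> 0 < f i"
  shows "minvsqrt (unitary_diag n U f) = unitary_diag n U (\<lambda>i. 1 / sqrt (f i))"
proof -
  have "\<And>i. i < n \<Longrightarrow> f i \<noteq> 0" using f by (metis less_irrefl)
  hence "minvsqrt (unitary_diag n U f) = msqrt (unitary_diag n U (\<lambda>i. 1 / f i))"
    unfolding minvsqrt_def by (simp add: minv_unitary_diag[OF U])
  also have "\<dots> = unitary_diag n U (\<lambda>i. sqrt (1 / f i))"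
    using f by (intro msqrt_unitary_diag[OF U]) (simp add: less_imp_le)
  finally show ?thesis by (simp add: real_sqrt_divide)
qed

lemma mtrace_unitary_diag:
  assumes U: "unitary n U"
  shows "mtrace (unitary_diag n U f) = complex_of_real (\<Sum>i<n. f i)"
proof -
  let ?D = "mat_diag n (\<lambda>i. complex_of_real (f i))"
  have Uc: "U \<in> carrier_mat n n" using U by (rule unitary_carrier)
  have "mtrace (unitary_diag n U f) = mtrace (adj U * (U * ?D))"
    unfolding unitary_diag_def using Uc by (intro mtrace_mult_commute[of _ n n]) auto
  also have "adj U * (U * ?D) = ?D" using U by simp
  finally show ?thesis by (simp add: mtrace_def mat_diag_def of_real_sum)
qed

lemma unitary_diag_eigenvalue:
  assumes U: "unitary n U" and x: "x \<in> carrier_vec n" "x \<noteq> 0\<^sub>v n"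
    and eig: "unitary_diag n U f *\<^sub>v x = complex_of_real r \<cdot>\<^sub>v x"
  shows "r \<in> f ` {..<n}"
proof -
  let ?D = "mat_diag n (\<lambda>i. complex_of_real (f i))"
  define y where "y = adj U *\<^sub>v x"
  have Uc: "U \<in> carrier_mat n n" using U by (rule unitary_carrier)
  have y: "y \<in> carrier_vec n" unfolding y_def using adj_carrier_mat[OF Uc] x(1) by (rule mult_mat_vec_carrier)
  have "U *\<^sub>v y = x" using U x by (simp add: y_def)
  hence "y \<noteq> 0\<^sub>v n" using x Uc by auto
  then obtain j where j: "j < n" "y $ j \<noteq> 0" using y by (auto simp: vec_eq_iff)
  have "U *\<^sub>v (?D *\<^sub>v y) = complex_of_real r \<cdot>\<^sub>v x"
    using eig U x by (simp add: unitary_diag_mult_vec y_def)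
  hence "adj U *\<^sub>v (U *\<^sub>v (?D *\<^sub>v y)) = adj U *\<^sub>v (complex_of_real r \<cdot>\<^sub>v x)"
    by (rule arg_cong)
  hence "?D *\<^sub>v y = complex_of_real r \<cdot>\<^sub>v y"
    using U Uc x y mult_mat_vec[OF adj_carrier_mat[OF Uc] x(1)] by (simp add: y_def)
  hence "(?D *\<^sub>v y) $ j = (complex_of_real r \<cdot>\<^sub>v y) $ j" by simp
  hence "complex_of_real (f j) * y $ j = complex_of_real r * y $ j"
    using j y by (simp add: mat_diag_mult_vec)
  hence "r = f j" using j(2) by simp
  thus ?thesis using j by blast
qed

lemma real_eigenvalues_unitary_diag:
  assumes U: "unitary n U"
  shows "{r. eigenvalue (unitary_diag n U f) (complex_of_real r)} = f ` {..<n}"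
proof (intro equalityI subsetI)
  have dim: "dim_row (unitary_diag n U f) = n" using unitary_diag_carrier[OF U, of f] by auto
  fix r assume "r \<in> {r. eigenvalue (unitary_diag n U f) (complex_of_real r)}"
  thus "r \<in> f ` {..<n}"
    using unitary_diag_eigenvalue[OF U] dim unfolding eigenvalue_def eigenvector_def by auto
next
  fix r assume "r \<in> f ` {..<n}"
  then obtain i where i: "i < n" "r = f i" by blast
  have "U *\<^sub>v unit_vec n i \<noteq> 0\<^sub>v n" using vnorm_unitary_col[OF U i(1)] by auto
  moreover have "dim_row (unitary_diag n U f) = n" using unitary_diag_carrier[OF U, of f] by auto
  moreover have "U *\<^sub>v unit_vec n i \<in> carrier_vec n" using unitary_carrier[OF U] by simp
  ultimately have "eigenvector (unitary_diag n U f) (U *\<^sub>v unit_vec n i) (complex_of_real r)"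
    unfolding eigenvector_def using i unitary_diag_mult_col[OF U i(1)] unitary_diag_carrier[OF U]
    by auto
  thus "r \<in> {r. eigenvalue (unitary_diag n U f) (complex_of_real r)}"
    unfolding eigenvalue_def by blast
qed

lemma lambda_min_unitary_diag:
  "unitary n U \<Longrightarrow> lambda_min (unitary_diag n U f) = Min (f ` {..<n})"
  by (simp add: lambda_min_def real_eigenvalues_unitary_diag)

lemma strictly_positive_sqrt:
  assumes "strictly_positive n A"
  shows "msqrt A \<in> carrier_mat n n" "minvsqrt A \<in> carrier_mat n n" "minv A \<in> carrier_mat n n"
    and "adj (msqrt A) = msqrt A" "adj (minvsqrt A) = minvsqrt A"
    and "msqrt A * msqrt A = A" "msqrt A * minvsqrt A = 1\<^sub>m n" "minvsqrt A * minvsqrt A = minv A"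
proof -
  obtain U t where U: "unitary n U" and A: "A = unitary_diag n U t" and t: "\<And>i. i < n \<Longrightarrow> 0 < t i"
    using strictly_positive_diagonalise[OF assms] by blast
  have S: "msqrt A = unitary_diag n U (\<lambda>i. sqrt (t i))"
    unfolding A using t by (intro msqrt_unitary_diag[OF U]) (simp add: less_imp_le)
  have R: "minvsqrt A = unitary_diag n U (\<lambda>i. 1 / sqrt (t i))"
    unfolding A using t by (rule minvsqrt_unitary_diag[OF U])
  have nz: "\<And>i. i < n \<Longrightarrow> t i \<noteq> 0" using t by (metis less_irrefl)
  have Ai: "minv A = unitary_diag n U (\<lambda>i. 1 / t i)"
    unfolding A using nz by (rule minv_unitary_diag[OF U])
  show "msqrt A \<in> carrier_mat n n" "minvsqrt A \<in> carrier_mat n n" "minv A \<in> carrier_mat n n"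
    unfolding S R Ai using U by (simp_all add: unitary_diag_carrier)
  show "adj (msqrt A) = msqrt A" "adj (minvsqrt A) = minvsqrt A"
    unfolding S R using U by (simp_all add: adj_unitary_diag)
  show "msqrt A * msqrt A = A"
    unfolding S using t by (simp add: A unitary_diag_mult[OF U] less_imp_le cong: unitary_diag_cong)
  show "msqrt A * minvsqrt A = 1\<^sub>m n"
    unfolding S R using nz by (simp add: unitary_diag_mult[OF U] unitary_diag_one[OF U, symmetric]
        cong: unitary_diag_cong)
  show "minvsqrt A * minvsqrt A = minv A"
    unfolding R Ai using t by (simp add: unitary_diag_mult[OF U] less_imp_le cong: unitary_diag_cong)
qed

lemma Re_cinner_minv:
  assumes "strictly_positive n A" "x \<in> carrier_vec n"
  shows "Re (cinner x (minv A *\<^sub>v x)) = (vnorm (minvsqrt A *\<^sub>v x))\<^sup>2"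
proof -
  note sq = strictly_positive_sqrt[OF assms(1)]
  have "minv A *\<^sub>v x = (minvsqrt A * minvsqrt A) *\<^sub>v x" using sq(8) by simp
  also have "\<dots> = minvsqrt A *\<^sub>v (minvsqrt A *\<^sub>v x)" using sq(2) assms(2) by simp
  finally have "cinner x (minv A *\<^sub>v x) = cinner (minvsqrt A *\<^sub>v x) (minvsqrt A *\<^sub>v x)"
    using sq assms(2) by (simp add: cinner_hermitian)
  thus ?thesis by (simp add: cinner_self)
qed

lemma Re_mtrace_minv_pos:
  assumes "strictly_positive n A" "0 < n"
  shows "0 < Re (mtrace (minv A))"
proof -
  obtain U t where U: "unitary n U" and A: "A = unitary_diag n U t" and t: "\<And>i. i < n \<Longrightarrow> 0 < t i"
    using strictly_positive_diagonalise[OF assms(1)] by blast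
  have "minv A = unitary_diag n U (\<lambda>i. 1 / t i)"
    unfolding A using t by (intro minv_unitary_diag[OF U]) (metis less_irrefl)
  moreover have "0 < (\<Sum>i<n. 1 / t i)" using t assms(2) by (intro sum_pos) auto
  ultimately show ?thesis by (simp add: mtrace_unitary_diag[OF U])
qed

lemma lambda_min_le_dim_div_mtrace_minv:
  assumes "strictly_positive n A" "0 < n"
  shows "lambda_min A \<le> real n / Re (mtrace (minv A))"
proof -
  obtain U t where U: "unitary n U" and A: "A = unitary_diag n U t" and t: "\<And>i. i < n \<Longrightarrow> 0 < t i"
    using strictly_positive_diagonalise[OF assms(1)] by blast
  have "minv A = unitary_diag n U (\<lambda>i. 1 / t i)"
    unfolding A using t by (intro minv_unitary_diag[OF U]) (metis less_irrefl)
  hence tr: "Re (mtrace (minv A)) = (\<Sum>i<n. 1 / t i)" by (simp add: mtrace_unitary_diag[OF U])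
  define m where "m = Min (t ` {..<n})"
  have "0 < m" unfolding m_def using t assms(2) by (subst Min_gr_iff) auto
  hence m: "lambda_min A = m" "0 < m" "\<And>i. i < n \<Longrightarrow> m \<le> t i"
    by (auto simp: A m_def lambda_min_unitary_diag[OF U])
  have "(\<Sum>i<n. 1 / t i) \<le> (\<Sum>i<n. 1 / m)" using m t by (intro sum_mono) (simp add: frac_le)
  hence "m * (\<Sum>i<n. 1 / t i) \<le> real n" using m(2) by (simp add: field_simps)
  moreover have "0 < (\<Sum>i<n. 1 / t i)" using t assms(2) by (intro sum_pos) auto
  ultimately show ?thesis by (simp add: tr m(1) field_simps)
qed

lemma cmod_cinner_minvsqrt_lower:
  assumes A: "strictly_positive n A" and e: "dim_vec e = n" "vnorm e = 1"
    and N: "\<And>x. x \<in> carrier_vec n \<Longrightarrow> vnorm x = 1 \<Longrightarrow> Re (cinner x (A *\<^sub>v x)) \<le> N"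
  shows "1 / N \<le> (cmod (cinner e (minvsqrt A *\<^sub>v e)))\<^sup>2"
proof -
  obtain U t where U: "unitary n U" and A_eq: "A = unitary_diag n U t" and t: "\<And>i. i < n \<Longrightarrow> 0 < t i"
    using strictly_positive_diagonalise[OF A] by blast
  have tN: "t i \<le> N" if "i < n" for i
    using N[of "U *\<^sub>v unit_vec n i"] cinner_unitary_diag_col[OF U that, of t] vnorm_unitary_col[OF U that]
      unitary_carrier[OF U] by (simp add: A_eq)
  have "n \<noteq> 0"
  proof
    assume "n = 0"
    hence "vnorm e = 0" using e(1) by (simp add: vnorm_def)
    thus False using e(2) by simp
  qed
  hence N0: "0 < N" using t tN by (meson less_le_trans not_gr_zero)
  define g where "g = adj U *\<^sub>v e"
  have g: "(\<Sum>i<n. (cmod (g $ i))\<^sup>2) = 1"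
    using vnorm_unitary[OF unitary_adj[OF U], of e] e unitary_carrier[OF U]
    by (simp add: g_def vnorm_def)
  have "minvsqrt A = unitary_diag n U (\<lambda>i. 1 / sqrt (t i))"
    unfolding A_eq using U t by (rule minvsqrt_unitary_diag)
  define a where "a = (\<Sum>i<n. 1 / sqrt (t i) * (cmod (g $ i))\<^sup>2)"
  have "cinner e (minvsqrt A *\<^sub>v e) = complex_of_real a"
    unfolding a_def g_def \<open>minvsqrt A = _\<close> using U e(1) by (rule cinner_unitary_diag)
  moreover have "1 / sqrt N \<le> a"
  proof -
    have "1 / sqrt N = 1 / sqrt N * (\<Sum>i<n. (cmod (g $ i))\<^sup>2)" by (simp add: g)
    also have "\<dots> = (\<Sum>i<n. 1 / sqrt N * (cmod (g $ i))\<^sup>2)" by (rule sum_distrib_left)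
    also have "\<dots> \<le> (\<Sum>i<n. 1 / sqrt (t i) * (cmod (g $ i))\<^sup>2)"
      using t tN by (intro sum_mono mult_right_mono) (auto simp: frac_le)
    finally show ?thesis by (simp only: a_def)
  qed
  ultimately have "1 / sqrt N \<le> cmod (cinner e (minvsqrt A *\<^sub>v e))" by simp
  hence "(1 / sqrt N)\<^sup>2 \<le> (cmod (cinner e (minvsqrt A *\<^sub>v e)))\<^sup>2"
    using N0 by (intro power_mono) auto
  thus ?thesis using N0 by (simp add: power_divide)
qed

lemma opnorm_pos:
  assumes "strictly_positive d T0" "0 < d"
  shows "0 < opnorm T0"
proof -
  have u: "unit_vec d 0 \<in> carrier_vec d" "vnorm (unit_vec d 0) = 1" "unit_vec d 0 \<noteq> 0\<^sub>v d"
    using assms(2) vnorm_unit_vec[of 0 d] by auto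
  hence "0 < Re (cinner (unit_vec d 0) (T0 *\<^sub>v unit_vec d 0))"
    using assms(1) unfolding strictly_positive_def by blast
  also have "\<dots> \<le> opnorm T0"
    using assms(1) u by (intro quadratic_form_le_opnorm[of _ d]) (auto simp: strictly_positive_def)
  finally show ?thesis .
qed

section \<open>One step of the iteration\<close>

locale damped_step =
  fixes n :: nat and A :: "complex mat" and e :: "complex vec" and \<tau> :: real
  assumes A: "strictly_positive n A"
    and e: "dim_vec e = n" "vnorm e = 1"
    and \<tau>: "0 < \<tau>" "\<tau> < 1"
begin

definition step :: "complex mat" where
  "step = msqrt A * id_minus_ketbra \<tau> e * msqrt A"

lemma step_carrier: "step \<in> carrier_mat n n"
  unfolding step_def
  using mult_carrier_mat[OF mult_carrier_mat[OF strictly_positive_sqrt(1)[OF A] id_minus_ketbra_carrier[OF e(1)]]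
      strictly_positive_sqrt(1)[OF A]] .

lemma mult_vec_eq_msqrt:
  assumes "x \<in> carrier_vec n"
  shows "A *\<^sub>v x = msqrt A *\<^sub>v (msqrt A *\<^sub>v x)"
proof -
  have "A *\<^sub>v x = (msqrt A * msqrt A) *\<^sub>v x" using strictly_positive_sqrt(6)[OF A] by simp
  also have "\<dots> = msqrt A *\<^sub>v (msqrt A *\<^sub>v x)" using strictly_positive_sqrt(1)[OF A] assms by simp
  finally show ?thesis .
qed

lemma cinner_eq_vnorm_msqrt:
  assumes x: "x \<in> carrier_vec n"
  shows "cinner x (A *\<^sub>v x) = complex_of_real ((vnorm (msqrt A *\<^sub>v x))\<^sup>2)"
proof -
  have S: "msqrt A \<in> carrier_mat n n" "adj (msqrt A) = msqrt A" using strictly_positive_sqrt[OF A] by auto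
  have "cinner x (A *\<^sub>v x) = cinner (msqrt A *\<^sub>v x) (msqrt A *\<^sub>v x)"
    unfolding mult_vec_eq_msqrt[OF x] using S x by (intro cinner_hermitian) auto
  thus ?thesis by (simp add: cinner_self)
qed

lemma cinner_step:
  assumes x: "x \<in> carrier_vec n"
  shows "cinner x (step *\<^sub>v x)
    = complex_of_real ((vnorm (msqrt A *\<^sub>v x))\<^sup>2 - \<tau> * (cmod (cinner e (msqrt A *\<^sub>v x)))\<^sup>2)"
proof -
  let ?S = "msqrt A"
  have S: "?S \<in> carrier_mat n n" "adj ?S = ?S" using strictly_positive_sqrt[OF A] by auto
  have D: "id_minus_ketbra \<tau> e \<in> carrier_mat n n" using id_minus_ketbra_carrier[OF e(1)] .
  have "step *\<^sub>v x = (?S * id_minus_ketbra \<tau> e) *\<^sub>v (?S *\<^sub>v x)"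
    unfolding step_def by (rule assoc_mult_mat_vec[OF mult_carrier_mat[OF S(1) D] S(1) x])
  also have "\<dots> = ?S *\<^sub>v (id_minus_ketbra \<tau> e *\<^sub>v (?S *\<^sub>v x))"
    by (rule assoc_mult_mat_vec[OF S(1) D mult_mat_vec_carrier[OF S(1) x]])
  finally have "cinner x (step *\<^sub>v x) = cinner (?S *\<^sub>v x) (id_minus_ketbra \<tau> e *\<^sub>v (?S *\<^sub>v x))"
    using cinner_hermitian[OF S _ mult_mat_vec_carrier[OF D mult_mat_vec_carrier[OF S(1) x]]] x by simp
  also have "\<dots> = complex_of_real ((vnorm (?S *\<^sub>v x))\<^sup>2 - \<tau> * (cmod (cinner e (?S *\<^sub>v x)))\<^sup>2)"
    using S x e(1) by (intro cinner_id_minus_ketbra) simp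
  finally show ?thesis .
qed

lemma quadratic_form_step_le: "x \<in> carrier_vec n \<Longrightarrow> Re (cinner x (step *\<^sub>v x)) \<le> Re (cinner x (A *\<^sub>v x))"
  using \<tau> by (simp add: cinner_step cinner_eq_vnorm_msqrt)

lemma adj_step: "adj step = step"
proof -
  have S: "msqrt A \<in> carrier_mat n n" "adj (msqrt A) = msqrt A" using strictly_positive_sqrt[OF A] by auto
  have D: "id_minus_ketbra \<tau> e \<in> carrier_mat n n" using id_minus_ketbra_carrier[OF e(1)] .
  have "adj step = adj (msqrt A) * adj (msqrt A * id_minus_ketbra \<tau> e)"
    unfolding step_def by (rule adj_mult[OF mult_carrier_mat[OF S(1) D] S(1)])
  also have "adj (msqrt A * id_minus_ketbra \<tau> e) = adj (id_minus_ketbra \<tau> e) * adj (msqrt A)"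
    by (rule adj_mult[OF S(1) D])
  finally show ?thesis
    using assoc_mult_mat[OF S(1) D S(1)] by (simp add: S(2) adj_id_minus_ketbra step_def)
qed

lemma strictly_positive_step: "strictly_positive n step"
  unfolding strictly_positive_def
proof (intro conjI ballI impI step_carrier adj_step)
  fix x :: "complex vec" assume x: "x \<in> carrier_vec n" "x \<noteq> 0\<^sub>v n"
  let ?y = "msqrt A *\<^sub>v x"
  have "0 < Re (cinner x (A *\<^sub>v x))" using A x unfolding strictly_positive_def by blast
  hence pos: "0 < (vnorm ?y)\<^sup>2" using cinner_eq_vnorm_msqrt[OF x(1)] by simp
  have "(cmod (cinner e ?y))\<^sup>2 \<le> (vnorm ?y)\<^sup>2"
    using strictly_positive_sqrt(1)[OF A] x e by (intro cmod_cinner_unit_sq_le) simp_all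
  hence "\<tau> * (cmod (cinner e ?y))\<^sup>2 \<le> \<tau> * (vnorm ?y)\<^sup>2" using \<tau> by simp
  moreover have "\<tau> * (vnorm ?y)\<^sup>2 < (vnorm ?y)\<^sup>2" using \<tau> pos by simp
  ultimately show "0 < Re (cinner x (step *\<^sub>v x))" using x by (simp add: cinner_step)
qed

lemma minv_step:
  "minv step = minv A + complex_of_real (\<tau> / (1 - \<tau>)) \<cdot>\<^sub>m
     ketbra (minvsqrt A *\<^sub>v e) (minvsqrt A *\<^sub>v e)"
proof -
  note sq = strictly_positive_sqrt[OF A]
  let ?R = "minvsqrt A" and ?K = "ketbra (minvsqrt A *\<^sub>v e) (minvsqrt A *\<^sub>v e)"
  have "minv step = ?R * id_minus_ketbra (- \<tau> / (1 - \<tau>)) e * ?R"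
    unfolding step_def using id_minus_ketbra_inverse[OF e(2)] e(1) \<tau> id_minus_ketbra_carrier[OF e(1)] sq
    by (intro minv_sandwich) auto
  also have "\<dots> = minv A - complex_of_real (- \<tau> / (1 - \<tau>)) \<cdot>\<^sub>m ?K"
    using sq e(1) by (simp add: hermitian_sandwich_id_minus_ketbra)
  also have "\<dots> = minv A + complex_of_real (\<tau> / (1 - \<tau>)) \<cdot>\<^sub>m ?K"
    using sq e(1) by (intro eq_matI) auto
  finally show ?thesis .
qed

lemma cinner_minv_step:
  "cinner e (minv step *\<^sub>v e) - cinner e (minv A *\<^sub>v e)
     = complex_of_real (\<tau> / (1 - \<tau>) * (cmod (cinner e (minvsqrt A *\<^sub>v e)))\<^sup>2)"
proof -
  note sq = strictly_positive_sqrt[OF A]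
  let ?c = "complex_of_real (\<tau> / (1 - \<tau>))" and ?r = "minvsqrt A *\<^sub>v e"
  have ec: "e \<in> carrier_vec n" using e(1) by (rule carrier_vecI)
  have r: "?r \<in> carrier_vec n" using sq(2) ec by simp
  have K: "ketbra ?r ?r \<in> carrier_mat n n" using ketbra_carrier[of ?r ?r] carrier_vecD[OF r] by simp
  have "minv step *\<^sub>v e = minv A *\<^sub>v e + (?c \<cdot>\<^sub>m ketbra ?r ?r) *\<^sub>v e"
    unfolding minv_step by (rule add_mult_distrib_mat_vec[OF sq(3) smult_carrier_mat[OF K] ec])
  also have "(?c \<cdot>\<^sub>m ketbra ?r ?r) *\<^sub>v e = (?c * cinner ?r e) \<cdot>\<^sub>v ?r"
    using carrier_vecD[OF r] e(1)
    by (simp add: smult_mat_mult_vec[OF K ec] mult_mat_vec[OF K ec] ketbra_mult_vec smult_smult_assoc)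
  finally have "cinner e (minv step *\<^sub>v e) = cinner e (minv A *\<^sub>v e) + ?c * (cinner e ?r * cinner ?r e)"
    using sq(3) ec carrier_vecD[OF r] by (simp add: cinner_add_right cinner_smult_right mult_ac)
  also have "cinner ?r e = cnj (cinner e ?r)" using cinner_conj_commute[of e ?r] carrier_vecD[OF r] e(1) by simp
  also have "cinner e ?r * cnj (cinner e ?r) = complex_of_real ((cmod (cinner e ?r))\<^sup>2)"
    by (rule complex_norm_square[symmetric])
  finally show ?thesis by (simp only: of_real_mult add_diff_cancel_left')
qed

lemma mtrace_minv_step:
  "mtrace (minv step) - mtrace (minv A) = complex_of_real (\<tau> / (1 - \<tau>)) * cinner e (minv A *\<^sub>v e)"
proof -
  note sq = strictly_positive_sqrt[OF A]
  let ?c = "complex_of_real (\<tau> / (1 - \<tau>))" and ?R = "minvsqrt A"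
  have ec: "e \<in> carrier_vec n" using e(1) by (rule carrier_vecI)
  have r: "?R *\<^sub>v e \<in> carrier_vec n" using sq(2) ec by simp
  have K: "ketbra (?R *\<^sub>v e) (?R *\<^sub>v e) \<in> carrier_mat n n"
    using ketbra_carrier[of "?R *\<^sub>v e" "?R *\<^sub>v e"] carrier_vecD[OF r] by simp
  have "cinner (?R *\<^sub>v e) (?R *\<^sub>v e) = cinner e (?R *\<^sub>v (?R *\<^sub>v e))"
    using sq ec by (intro cinner_hermitian[symmetric]) auto
  also have "?R *\<^sub>v (?R *\<^sub>v e) = (?R * ?R) *\<^sub>v e" using sq(2) ec by simp
  also have "\<dots> = minv A *\<^sub>v e" using sq(8) by simp
  finally have "cinner (?R *\<^sub>v e) (?R *\<^sub>v e) = cinner e (minv A *\<^sub>v e)" .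
  moreover have "mtrace (minv step) = mtrace (minv A) + ?c * mtrace (ketbra (?R *\<^sub>v e) (?R *\<^sub>v e))"
    unfolding minv_step mtrace_add[OF sq(3) smult_carrier_mat[OF K]] mtrace_smult[OF K] ..
  ultimately show ?thesis by (simp add: mtrace_ketbra)
qed

end

section \<open>The iteration\<close>

lemma linear_and_quadratic_growth:
  fixes b s :: "nat \<Rightarrow> real" and q \<delta> :: real
  assumes q: "0 \<le> q" and b: "\<And>k. b k + \<delta> \<le> b (Suc k)" and s: "\<And>k. s (Suc k) = s k + q * b k"
  shows "b 0 + real k * \<delta> \<le> b k"
    and "s 0 + q * real k * b 0 + q * \<delta> / 2 * real k * (real k - 1) \<le> s k"
proof -
  show b_lin: "b 0 + real k * \<delta> \<le> b k" for k
  proof (induction k)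
    case (Suc k)
    have "b 0 + real (Suc k) * \<delta> = (b 0 + real k * \<delta>) + \<delta>" by (simp add: algebra_simps)
    thus ?case using Suc.IH b[of k] by linarith
  qed simp
  show "s 0 + q * real k * b 0 + q * \<delta> / 2 * real k * (real k - 1) \<le> s k"
  proof (induction k)
    case (Suc k)
    have "s 0 + q * real (Suc k) * b 0 + q * \<delta> / 2 * real (Suc k) * (real (Suc k) - 1)
        = (s 0 + q * real k * b 0 + q * \<delta> / 2 * real k * (real k - 1)) + q * (b 0 + real k * \<delta>)"
      by (simp add: field_simps)
    also have "\<dots> \<le> s k + q * b k" using Suc.IH b_lin[of k] q by (intro add_mono mult_left_mono)
    finally show ?case using s[of k] by simp
  qed simp
qed

lemma inverse_quadratic_bound:
  fixes a b K S x :: real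
  assumes a: "0 < a" and b: "0 < b" and K: "1 \<le> K" and x: "0 \<le> x" and S: "a + b * K * (K - 1) \<le> S"
  shows "x / S \<le> x * (1 / a + 2 / b) / K\<^sup>2"
proof -
  have bKK: "0 \<le> b * K * (K - 1)" using b K by simp
  have "(1 / a + 2 / b) * (a + b * K * (K - 1)) = 1 + b * K * (K - 1) / a + 2 * a / b + 2 * K * (K - 1)"
    using a b by (simp add: field_simps)
  moreover have "0 \<le> b * K * (K - 1) / a" "0 \<le> 2 * a / b" using a b bKK by simp_all
  moreover have "K\<^sup>2 \<le> 1 + 2 * K * (K - 1)"
    using zero_le_power2[of "K - 1"] by (simp add: power2_eq_square algebra_simps)
  ultimately have "K\<^sup>2 \<le> (1 / a + 2 / b) * (a + b * K * (K - 1))" by linarith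
  also have "\<dots> \<le> (1 / a + 2 / b) * S" using S a b by (intro mult_left_mono) auto
  finally have "x * K\<^sup>2 \<le> x * (1 / a + 2 / b) * S" using x by (simp add: mult_left_mono mult.assoc)
  moreover have "0 < S" using S a bKK by linarith
  moreover have "0 < K\<^sup>2" using K by simp
  ultimately show ?thesis by (simp add: divide_le_eq le_divide_eq mult.commute mult.left_commute)
qed

lemma Tseq_Suc:
  "Tseq \<tau> e T0 (Suc k) = msqrt (Tseq \<tau> e T0 k) * id_minus_ketbra \<tau> e * msqrt (Tseq \<tau> e T0 k)"
  by (simp add: id_minus_ketbra_def)

locale damped_iteration =
  fixes d :: nat and e :: "complex vec" and \<tau> :: real and T0 :: "complex mat"
  assumes e: "dim_vec e = d" "vnorm e = 1"
    and \<tau>: "0 < \<tau>" "\<tau> < 1"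
    and T0: "strictly_positive d T0"
begin

abbreviation T :: "nat \<Rightarrow> complex mat" where
  "T \<equiv> Tseq \<tau> e T0"

lemma T_loewner_decreasing:
  "strictly_positive d (T k) \<and> (\<forall>x\<in>carrier_vec d. Re (cinner x (T k *\<^sub>v x)) \<le> Re (cinner x (T0 *\<^sub>v x)))"
proof (induction k)
  case (Suc k)
  then interpret damped_step d "T k" e \<tau> using e \<tau> by unfold_locales auto
  have T_Suc: "T (Suc k) = step" unfolding step_def by (rule Tseq_Suc)
  have "Re (cinner x (step *\<^sub>v x)) \<le> Re (cinner x (T0 *\<^sub>v x))" if "x \<in> carrier_vec d" for x
    using quadratic_form_step_le[OF that] Suc[THEN conjunct2, rule_format, OF that] by linarith
  thus ?case unfolding T_Suc using strictly_positive_step by blast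
qed (simp add: T0)

lemma damped_step_T: "damped_step d (T k) e \<tau>"
  using T_loewner_decreasing e \<tau> by unfold_locales auto

lemma T_Suc: "T (Suc k) = damped_step.step (T k) e \<tau>"
  unfolding damped_step.step_def[OF damped_step_T] by (rule Tseq_Suc)

lemma minv_T_Suc:
  "minv (T (Suc k)) = minv (T k) + complex_of_real (\<tau> / (1 - \<tau>)) \<cdot>\<^sub>m
     ketbra (minvsqrt (T k) *\<^sub>v e) (minvsqrt (T k) *\<^sub>v e)"
  unfolding T_Suc by (rule damped_step.minv_step[OF damped_step_T])

lemma cinner_minv_T_Suc:
  "cinner e (minv (T (Suc k)) *\<^sub>v e) - cinner e (minv (T k) *\<^sub>v e)
     = complex_of_real (\<tau> / (1 - \<tau>) * (cmod (cinner e (minvsqrt (T k) *\<^sub>v e)))\<^sup>2)"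
  unfolding T_Suc by (rule damped_step.cinner_minv_step[OF damped_step_T])

lemma mtrace_minv_T_Suc:
  "mtrace (minv (T (Suc k))) - mtrace (minv (T k)) = complex_of_real (\<tau> / (1 - \<tau>)) * cinner e (minv (T k) *\<^sub>v e)"
  unfolding T_Suc by (rule damped_step.mtrace_minv_step[OF damped_step_T])

lemma cinner_minvsqrt_T_lower: "1 / opnorm T0 \<le> (cmod (cinner e (minvsqrt (T k) *\<^sub>v e)))\<^sup>2"
proof (rule cmod_cinner_minvsqrt_lower[OF _ e])
  show "strictly_positive d (T k)" using T_loewner_decreasing by blast
  fix x assume "x \<in> carrier_vec d" "vnorm x = 1"
  thus "Re (cinner x (T k *\<^sub>v x)) \<le> opnorm T0"
    using T_loewner_decreasing[of k] quadratic_form_le_opnorm[of T0 d x] T0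
    by (force simp: strictly_positive_def)
qed

lemma beta_growth:
  "Re (cinner e (minv (T 0) *\<^sub>v e)) + real k * \<tau> / ((1 - \<tau>) * opnorm T0)
     \<le> Re (cinner e (minv (T k) *\<^sub>v e))"
  and trace_growth:
  "Re (mtrace (minv (T 0))) + \<tau> / (1 - \<tau>) * real k * Re (cinner e (minv (T 0) *\<^sub>v e))
     + \<tau>\<^sup>2 / (2 * (1 - \<tau>)\<^sup>2 * opnorm T0) * real k * (real k - 1)
     \<le> Re (mtrace (minv (T k)))"
proof -
  have "0 < d" using e by (cases d) (auto simp: vnorm_def)
  hence "0 < opnorm T0" using T0 by (rule opnorm_pos[rotated])
  define q where "q = \<tau> / (1 - \<tau>)"
  let ?b = "\<lambda>k. Re (cinner e (minv (T k) *\<^sub>v e))" and ?s = "\<lambda>k. Re (mtrace (minv (T k)))"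
  have q: "0 \<le> q" using \<tau> by (simp add: q_def)
  have b: "?b k + q / opnorm T0 \<le> ?b (Suc k)" for k
  proof -
    have "?b (Suc k) - ?b k = q * (cmod (cinner e (minvsqrt (T k) *\<^sub>v e)))\<^sup>2"
      using arg_cong[OF cinner_minv_T_Suc[of k], of Re] by (simp add: q_def)
    moreover have "q * (1 / opnorm T0) \<le> q * (cmod (cinner e (minvsqrt (T k) *\<^sub>v e)))\<^sup>2"
      using cinner_minvsqrt_T_lower q by (rule mult_left_mono)
    ultimately show ?thesis by simp
  qed
  have s: "?s (Suc k) = ?s k + q * ?b k" for k
  proof -
    have "?s (Suc k) - ?s k = q * ?b k"
      using arg_cong[OF mtrace_minv_T_Suc[of k], of Re] by (simp add: q_def)
    thus ?thesis by simp
  qed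
  note growth = linear_and_quadratic_growth[of q ?b "q / opnorm T0" ?s, OF q b s]
  show "?b 0 + real k * \<tau> / ((1 - \<tau>) * opnorm T0) \<le> ?b k"
    using growth(1)[of k] by (simp add: q_def)
  show "?s 0 + \<tau> / (1 - \<tau>) * real k * ?b 0 + \<tau>\<^sup>2 / (2 * (1 - \<tau>)\<^sup>2 * opnorm T0) * real k * (real k - 1)
     \<le> ?s k"
    using growth(2)[of k] by (simp add: q_def power2_eq_square mult_ac)
qed

end

lemma Tseq_lambda_min_decay:
  assumes \<tau>: "0 < \<tau>" "\<tau> < 1" and T0: "strictly_positive d T0"
  shows "\<exists>C > 0. \<forall>e' \<in> carrier_vec d. vnorm e' = 1 \<longrightarrow>
        (\<forall>k \<ge> 1.
           lambda_min (Tseq \<tau> e' T0 k) \<le> real d / Re (mtrace (minv (Tseq \<tau> e' T0 k)))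
         \<and> real d / Re (mtrace (minv (Tseq \<tau> e' T0 k))) \<le> C / (real k)\<^sup>2)"
proof (cases "d = 0")
  case True
  hence "\<not> (e' \<in> carrier_vec d \<and> vnorm e' = 1)" for e' by (auto simp: vnorm_def)
  thus ?thesis by (intro exI[of _ 1]) auto
next
  case False
  define a where "a = Re (mtrace (minv T0))"
  define b where "b = \<tau>\<^sup>2 / (2 * (1 - \<tau>)\<^sup>2 * opnorm T0)"
  have a: "0 < a" unfolding a_def using T0 False by (intro Re_mtrace_minv_pos) auto
  have b: "0 < b" unfolding b_def using \<tau> opnorm_pos[OF T0] False by simp
  have C: "0 < real d * (1 / a + 2 / b)" using a b False by (intro mult_pos_pos add_pos_pos) auto
  show ?thesis
  proof (intro exI[of _ "real d * (1 / a + 2 / b)"] conjI C ballI impI allI)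
    fix e' :: "complex vec" and k :: nat
    assume e': "e' \<in> carrier_vec d" "vnorm e' = 1" and k: "1 \<le> k"
    interpret damped_iteration d e' \<tau> T0 using e' \<tau> T0 by unfold_locales auto
    show "lambda_min (T k) \<le> real d / Re (mtrace (minv (T k)))"
      using T_loewner_decreasing False by (intro lambda_min_le_dim_div_mtrace_minv) auto
    have "0 \<le> Re (cinner e' (minv T0 *\<^sub>v e'))" using Re_cinner_minv[OF T0 e'(1)] by simp
    hence "0 \<le> \<tau> / (1 - \<tau>) * real k * Re (cinner e' (minv T0 *\<^sub>v e'))" using \<tau> by simp
    hence "a + b * real k * (real k - 1) \<le> Re (mtrace (minv (T k)))"
      using trace_growth[of k] unfolding Tseq.simps(1) a_def b_def by linarith
    thus "real d / Re (mtrace (minv (T k))) \<le> real d * (1 / a + 2 / b) / (real k)\<^sup>2"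
      using k by (intro inverse_quadratic_bound[OF a b]) auto
  qed
qed

theorem proposition3p4:
  fixes d :: nat and e :: "complex vec" and \<tau> :: real and T0 :: "complex mat"
  defines "\<rho> \<equiv> 1 - \<tau>"
  defines "T \<equiv> Tseq \<tau> e T0"
  defines "\<beta> \<equiv> \<lambda>k. cinner e (minv (T k) *\<^sub>v e)"
  defines "s \<equiv> \<lambda>k. mtrace (minv (T k))"
  assumes e: "e \<in> carrier_vec d" "vnorm e = 1"
    and tau: "0 < \<tau>" "\<tau> < 1"
    and T0: "strictly_positive d T0"
  shows
    "(\<forall>k. strictly_positive d (T k))
   \<and> (\<forall>k. minv (T (Suc k)) = minv (T k) +
          complex_of_real (\<tau> / \<rho>) \<cdot>\<^sub>m
            ketbra (minvsqrt (T k) *\<^sub>v e) (minvsqrt (T k) *\<^sub>v e))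
   \<and> (\<forall>k. \<beta> (Suc k) - \<beta> k =
          complex_of_real (\<tau> / \<rho> * (cmod (cinner e (minvsqrt (T k) *\<^sub>v e)))\<^sup>2))
   \<and> (\<forall>k. s (Suc k) - s k = complex_of_real (\<tau> / \<rho>) * \<beta> k)
   \<and> (\<forall>k. Re (\<beta> k) \<ge> Re (\<beta> 0) + real k * \<tau> / (\<rho> * opnorm T0))
   \<and> (\<forall>k. Re (s k) \<ge> Re (s 0) + \<tau> / \<rho> * real k * Re (\<beta> 0)
          + \<tau>\<^sup>2 / (2 * \<rho>\<^sup>2 * opnorm T0) * real k * (real k - 1))
   \<and> (\<exists>C > 0. \<forall>e' \<in> carrier_vec d. vnorm e' = 1 \<longrightarrow>
        (\<forall>k \<ge> 1.
           lambda_min (Tseq \<tau> e' T0 k) \<le> real d / Re (mtrace (minv (Tseq \<tau> e' T0 k)))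
         \<and> real d / Re (mtrace (minv (Tseq \<tau> e' T0 k))) \<le> C / (real k)\<^sup>2))"
proof -
  interpret damped_iteration d e \<tau> T0 using e tau T0 by unfold_locales auto
  show ?thesis
    unfolding \<rho>_def T_def \<beta>_def s_def
    using T_loewner_decreasing minv_T_Suc cinner_minv_T_Suc mtrace_minv_T_Suc beta_growth trace_growth
      Tseq_lambda_min_decay[OF tau T0]
    by (intro conjI allI) blast+
qed

end
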